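(* Let $q$ be a prime power and let $A$ and $B$ be parity check matrices over $\mathbb{F}_q$ of the Hamming codes $[n_a,k_a,3]_q$ and $[n_b,k_b,3]_q$, where $n_a=(q^{m_a}-1)/(q-1)\ge3$, $n_b=(q^{m_b}-1)/(q-1)\ge3$, $k_a=n_a-m_a$, $k_b=n_b-m_b$. Then $H=A\otimes B$ is a parity check matrix of a $q$-ary completely regular $[n,k,d]_q$-code $C$ with $$n=n_an_b,\quad k=n-m_am_b,\quad d=3,\quad \rho=\min\{m_a,m_b\},$$ whose intersection numbers are, for $\ell=0,1,\dots,\rho$, $$b_\ell=(q-1)\Big(n_a-\frac{q^\ell-1}{q-1}\Big)\Big(n_b-\frac{q^\ell-1}{q-1}\Big),\qquad c_\ell=\frac{q^\ell-1}{q-1}\,q^{\ell-1},\qquad a_\ell=(q-1)n_an_b-c_\ell-b_\ell .$$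
   Context: $A\otimes B$ is the Kronecker product (each entry $a_{r,s}$ of $A$ replaced by the block $a_{r,s}B$). The $q$-ary Hamming code with $m$ check symbols has a parity check matrix of size $m\times(q^m-1)/(q-1)$ whose columns are one nonzero representative of each one-dimensional subspace of $\mathbb{F}_q^m$. $\rho$ is the covering radius. For a code $C$ of length $n$ and $C(l)=\{{\bf x}\in\mathbb{F}_q^n: d({\bf x},C)=l\}$, $C$ is completely regular if for every $l\ge0$ each ${\bf x}\in C(l)$ has the same number $c_l$ of neighbors (vectors at Hamming distance 1) in $C(l-1)$ and the same number $b_l$ of neighbors in $C(l+1)$; then $a_l=(q-1)n-b_l-c_l$, and $c_0=b_\rho=0$. *)

theory Defs
  imports Main
begin

text \<open>Vectors of length n over a field are functions nat => 'a vanishing outside {..<n};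
  matrices are functions nat => nat => 'a, only entries with row < m, column < n being relevant.\<close>

definition vecs :: "nat \<Rightarrow> (nat \<Rightarrow> 'a::zero) set" where
  "vecs n = {x. \<forall>i\<ge>n. x i = 0}"

definition hamming_pcm :: "(nat \<Rightarrow> nat \<Rightarrow> 'a::field) \<Rightarrow> nat \<Rightarrow> nat \<Rightarrow> bool" where
  "hamming_pcm A m n \<longleftrightarrow>
     (\<forall>j<n. \<exists>i<m. A i j \<noteq> 0) \<and>
     (\<forall>v\<in>vecs m. (\<exists>i<m. v i \<noteq> 0) \<longrightarrow>
        (\<exists>!j. j < n \<and> (\<exists>c. c \<noteq> 0 \<and> (\<forall>i<m. A i j = c * v i))))"

definition kron :: "(nat \<Rightarrow> nat \<Rightarrow> 'a::times) \<Rightarrow> (nat \<Rightarrow> nat \<Rightarrow> 'a) \<Rightarrow> nat \<Rightarrow> nat \<Rightarrow> (nat \<Rightarrow> nat \<Rightarrow> 'a)" where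
  "kron A B mb nb = (\<lambda>r s. A (r div mb) (s div nb) * B (r mod mb) (s mod nb))"

definition kernel_code :: "(nat \<Rightarrow> nat \<Rightarrow> 'a::comm_ring) \<Rightarrow> nat \<Rightarrow> nat \<Rightarrow> (nat \<Rightarrow> 'a) set" where
  "kernel_code H m n = {x \<in> vecs n. \<forall>r<m. (\<Sum>s<n. H r s * x s) = 0}"

definition hdist :: "nat \<Rightarrow> (nat \<Rightarrow> 'a) \<Rightarrow> (nat \<Rightarrow> 'a) \<Rightarrow> nat" where
  "hdist n x y = card {i. i < n \<and> x i \<noteq> y i}"

definition dist_code :: "nat \<Rightarrow> (nat \<Rightarrow> 'a) set \<Rightarrow> (nat \<Rightarrow> 'a) \<Rightarrow> nat" where
  "dist_code n C x = Min (hdist n x ` C)"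

definition min_dist :: "nat \<Rightarrow> (nat \<Rightarrow> 'a) set \<Rightarrow> nat" where
  "min_dist n C = Min {hdist n x y | x y. x \<in> C \<and> y \<in> C \<and> x \<noteq> y}"

definition covering_radius :: "nat \<Rightarrow> (nat \<Rightarrow> 'a::zero) set \<Rightarrow> nat" where
  "covering_radius n C = Max (dist_code n C ` vecs n)"

text \<open>C(l) = vectors at distance l from C; indexed by int so that C(-1) is empty.\<close>
definition layer :: "nat \<Rightarrow> (nat \<Rightarrow> 'a::zero) set \<Rightarrow> int \<Rightarrow> (nat \<Rightarrow> 'a) set" where
  "layer n C l = {x \<in> vecs n. int (dist_code n C x) = l}"

definition neighbours :: "nat \<Rightarrow> (nat \<Rightarrow> 'a::zero) \<Rightarrow> (nat \<Rightarrow> 'a) set" where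
  "neighbours n x = {y \<in> vecs n. hdist n x y = 1}"

definition completely_regular :: "nat \<Rightarrow> (nat \<Rightarrow> 'a::zero) set \<Rightarrow> (nat \<Rightarrow> nat) \<Rightarrow> (nat \<Rightarrow> nat) \<Rightarrow> bool" where
  "completely_regular n C b c \<longleftrightarrow>
     (\<forall>l::nat. \<forall>x \<in> layer n C (int l).
        card (neighbours n x \<inter> layer n C (int l + 1)) = b l \<and>
        card (neighbours n x \<inter> layer n C (int l - 1)) = c l)"

end

theory Submission
  imports Defs "HOL-Library.Function_Algebras" "HOL-Library.FuncSet" "HOL-Library.Cardinality"
begin

text \<open>
  Writing a word x of length
  n = na nb as an na x nb matrix X, its syndrome H x is the ma x mb matrix A X B^T.  A word of
  weight one with entry c at position (j, j') has syndrome (c a_j) b_j'^T, and because every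
  projective point occurs exactly once among the columns of a Hamming matrix, this gives a
  bijection between the weight-one words and the rank-one ma x mb matrices.
  Consequently the distance of x to the code C equals the rank of its syndrome, the neighbours of
  x correspond to the rank-one updates S + R of S = A X B^T, and the distance layers of C are the
  rank classes of matrices.  Complete regularity and the intersection numbers then follow from a
  count of rank-one updates: for an m x k matrix S of rank r over F_q, there are
  (q^m - q^r)(q^k - q^r)/(q - 1) rank-one R with rank (S + R) = r + 1 and (q^r - 1) q^(r-1)/(q - 1)
  with rank (S + R) = r - 1.
\<close>

section \<open>Counting, vectors and subspaces over a finite field\<close>

lemma card_fibres:
  assumes "finite X" "\<And>y. y \<in> f ` X \<Longrightarrow> card {x\<in>X. f x = y} = c"
  shows "card X = card (f ` X) * c"
proof -
  have X: "X = (\<Union>y\<in>f ` X. {x\<in>X. f x = y})" by auto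
  have "card X = (\<Sum>y\<in>f ` X. card {x\<in>X. f x = y})"
    by (subst X, rule card_UN_disjoint) (use assms in auto)
  also have "\<dots> = (\<Sum>y\<in>f ` X. c)" using assms(2) by simp
  finally show ?thesis by simp
qed

lemma CARD_field_ge_2: "2 \<le> CARD('a::{finite,field})"
proof -
  have "card {0::'a, 1} \<le> CARD('a)" by (rule card_mono) auto
  then show ?thesis by simp
qed

lemma power_CARD_inject: "CARD('a::{finite,field}) ^ a = CARD('a) ^ b \<longleftrightarrow> a = b"
  using CARD_field_ge_2[where 'a='a] by simp

definition smul :: "'a::field \<Rightarrow> (nat \<Rightarrow> 'a) \<Rightarrow> nat \<Rightarrow> 'a" where
  "smul c x = (\<lambda>i. c * x i)"

definition single :: "nat \<Rightarrow> 'a::zero \<Rightarrow> nat \<Rightarrow> 'a" where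
  "single i c = (\<lambda>j. if j = i then c else 0)"

lemma smul_simps [simp]:
  "smul 1 x = x" "smul 0 x = 0" "smul c 0 = 0" "smul (-1) x = - x"
  "smul c (x + y) = smul c x + smul c y" "smul c (smul d x) = smul (c * d) x" "smul c x i = c * x i"
  by (auto simp: smul_def fun_eq_iff algebra_simps)

lemma smul_nonzero:
  assumes "c \<noteq> 0" "u \<noteq> 0" shows "smul c (u :: nat \<Rightarrow> 'a::field) \<noteq> 0"
  using assms by (auto simp: fun_eq_iff)

lemma smul_cancel:
  assumes "u \<noteq> 0" "smul c u = smul d (u :: nat \<Rightarrow> 'a::field)" shows "c = d"
proof -
  obtain i where "u i \<noteq> 0" using assms(1) by (auto simp: fun_eq_iff)
  then show ?thesis using fun_cong[OF assms(2), of i] by simp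
qed

lemma vecs_add [intro]: "(x :: nat \<Rightarrow> 'a::ab_group_add) \<in> vecs n \<Longrightarrow> y \<in> vecs n \<Longrightarrow> x + y \<in> vecs n"
  by (simp add: vecs_def)

lemma vecs_diff [intro]: "(x :: nat \<Rightarrow> 'a::ab_group_add) \<in> vecs n \<Longrightarrow> y \<in> vecs n \<Longrightarrow> x - y \<in> vecs n"
  by (simp add: vecs_def)

lemma vecs_zero [intro, simp]: "(0 :: nat \<Rightarrow> 'a::zero) \<in> vecs n"
  by (simp add: vecs_def)

lemma vecs_smul [intro]: "x \<in> vecs n \<Longrightarrow> smul c x \<in> vecs n"
  by (simp add: vecs_def)

lemma vecs_single [intro]: "i < n \<Longrightarrow> single i c \<in> vecs n"
  by (simp add: vecs_def single_def)

lemma vecs_nonzero_coord: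
  assumes "x \<in> vecs k" "x \<noteq> 0" obtains i where "i < k" "x i \<noteq> 0"
proof -
  obtain i where "x i \<noteq> 0" using assms(2) by (auto simp: fun_eq_iff)
  moreover have "i < k" using assms(1) \<open>x i \<noteq> 0\<close> unfolding vecs_def by (simp add: not_less[symmetric]) blast
  ultimately show ?thesis using that by blast
qed

lemma bij_vecs_PiE:
  "bij_betw (\<lambda>x. restrict x {..<k}) (vecs k :: (nat \<Rightarrow> 'a::zero) set) ({..<k} \<rightarrow>\<^sub>E UNIV)"
proof (rule bij_betwI[where g = "\<lambda>p i. if i < k then p i else 0"])
  show "(\<lambda>p i. if i < k then p i else 0) \<in> ({..<k} \<rightarrow>\<^sub>E UNIV) \<rightarrow> (vecs k :: (nat \<Rightarrow> 'a) set)"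
    by (auto simp: vecs_def)
qed (auto simp: vecs_def PiE_def extensional_def)

lemma finite_vecs [simp, intro]: "finite (vecs k :: (nat \<Rightarrow> 'a::{finite,zero}) set)"
  using bij_betw_finite[OF bij_vecs_PiE[of k, where 'a='a]] finite_PiE[of "{..<k}" "\<lambda>_. UNIV :: 'a set"] by simp

lemma card_vecs: "card (vecs k :: (nat \<Rightarrow> 'a::{finite,zero}) set) = CARD('a) ^ k"
  using bij_betw_same_card[OF bij_vecs_PiE] by (simp add: card_PiE)

lemma finite_subset_vecs [intro]: "U \<subseteq> vecs k \<Longrightarrow> finite (U :: (nat \<Rightarrow> 'a::{finite,zero}) set)"
  using finite_subset by blast

definition is_subspace :: "(nat \<Rightarrow> 'a::field) set \<Rightarrow> bool" where
  "is_subspace U \<longleftrightarrow> 0 \<in> U \<and> (\<forall>x\<in>U. \<forall>y\<in>U. x + y \<in> U) \<and> (\<forall>c. \<forall>x\<in>U. smul c x \<in> U)"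

lemma is_subspaceD:
  assumes "is_subspace U"
  shows "0 \<in> U" "x \<in> U \<Longrightarrow> y \<in> U \<Longrightarrow> x + y \<in> U" "x \<in> U \<Longrightarrow> smul c x \<in> U"
    "x \<in> U \<Longrightarrow> y \<in> U \<Longrightarrow> x - y \<in> U"
proof -
  show "0 \<in> U" "x \<in> U \<Longrightarrow> y \<in> U \<Longrightarrow> x + y \<in> U" "x \<in> U \<Longrightarrow> smul c x \<in> U"
    using assms by (simp_all add: is_subspace_def)
  show "x \<in> U \<Longrightarrow> y \<in> U \<Longrightarrow> x - y \<in> U"
    using assms unfolding is_subspace_def by (metis diff_conv_add_uminus smul_simps(4))
qed

lemma is_subspace_vecs: "is_subspace (vecs k)"
  by (auto simp: is_subspace_def)

text \<open>The fibres of an additive map on a subspace are translates of its kernel.\<close>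
lemma card_fibre_additive:
  fixes L :: "(nat \<Rightarrow> 'a::field) \<Rightarrow> 'b::ab_group_add"
  assumes U: "is_subspace U" and add: "\<And>x y. x \<in> U \<Longrightarrow> y \<in> U \<Longrightarrow> L (x + y) = L x + L y"
    and x0: "x0 \<in> U"
  shows "card {x\<in>U. L x = L x0} = card {x\<in>U. L x = 0}"
proof -
  have "{x\<in>U. L x = L x0} = (\<lambda>k. x0 + k) ` {x\<in>U. L x = 0}"
  proof (rule set_eqI, rule iffI)
    fix x assume x: "x \<in> {x\<in>U. L x = L x0}"
    have d: "x - x0 \<in> U" using is_subspaceD(4)[OF U] x x0 by auto
    have "L x = L x0 + L (x - x0)" using add[OF x0 d] by simp
    then show "x \<in> (\<lambda>k. x0 + k) ` {x\<in>U. L x = 0}"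
      using x d by (intro image_eqI[where x="x - x0"]) auto
  next
    fix x assume "x \<in> (\<lambda>k. x0 + k) ` {x\<in>U. L x = 0}"
    then show "x \<in> {x\<in>U. L x = L x0}" using add x0 is_subspaceD(2)[OF U x0] by auto
  qed
  then show ?thesis by (simp add: card_image)
qed

lemma card_additive:
  fixes L :: "(nat \<Rightarrow> 'a::field) \<Rightarrow> 'b::ab_group_add"
  assumes U: "is_subspace U" "finite U" and add: "\<And>x y. x \<in> U \<Longrightarrow> y \<in> U \<Longrightarrow> L (x + y) = L x + L y"
  shows "card U = card (L ` U) * card {x\<in>U. L x = 0}"
proof (rule card_fibres[OF U(2)])
  fix y assume "y \<in> L ` U"
  then obtain x0 where "x0 \<in> U" "y = L x0" by blast
  then show "card {x\<in>U. L x = y} = card {x\<in>U. L x = 0}"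
    using card_fibre_additive[of U L x0, OF U(1) add] by blast
qed

text \<open>A linear functional that is nonzero on U is onto the field, so its kernel has index q.\<close>
lemma card_functional:
  fixes \<phi> :: "(nat \<Rightarrow> 'a::{finite,field}) \<Rightarrow> 'a"
  assumes U: "is_subspace U" "finite U"
    and add: "\<And>x y. x \<in> U \<Longrightarrow> y \<in> U \<Longrightarrow> \<phi> (x + y) = \<phi> x + \<phi> y"
    and hom: "\<And>c x. x \<in> U \<Longrightarrow> \<phi> (smul c x) = c * \<phi> x"
    and nz: "x1 \<in> U" "\<phi> x1 \<noteq> 0"
  shows "card U = CARD('a) * card {x\<in>U. \<phi> x = 0}"
proof -
  have "a \<in> \<phi> ` U" for a
  proof
    show "a = \<phi> (smul (a / \<phi> x1) x1)" using hom[OF nz(1)] nz(2) by simp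
  qed (rule is_subspaceD(3)[OF U(1) nz(1)])
  then have "\<phi> ` U = UNIV" by blast
  moreover have "card U = card (\<phi> ` U) * card {x\<in>U. \<phi> x = 0}" by (rule card_additive[of U \<phi>, OF U add])
  ultimately show ?thesis by simp
qed

lemma card_subspace_power:
  assumes "is_subspace (U :: (nat \<Rightarrow> 'a::{finite,field}) set)" "U \<subseteq> vecs k"
  shows "\<exists>d\<le>k. card U = CARD('a) ^ d"
  using assms
proof (induction k arbitrary: U)
  case 0
  have "vecs 0 = {0 :: nat \<Rightarrow> 'a}" by (auto simp: vecs_def fun_eq_iff)
  then have "U = {0}" using 0 is_subspaceD(1)[OF 0(1)] by blast
  then show ?case by simp
next
  case (Suc k)
  have finU: "finite U" using Suc(3) by blast
  define U0 where "U0 = {x\<in>U. x k = 0}"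
  have "is_subspace U0"
    unfolding is_subspace_def U0_def
    using is_subspaceD(1-3)[OF Suc(2)] by simp
  moreover have "U0 \<subseteq> vecs k"
  proof
    fix x assume "x \<in> U0"
    then have "x \<in> vecs (Suc k)" "x k = 0" using Suc(3) unfolding U0_def by auto
    then show "x \<in> vecs k"
      unfolding vecs_def by (auto simp: le_Suc_eq dest: le_imp_less_or_eq)
  qed
  ultimately obtain d where d: "d \<le> k" "card U0 = CARD('a) ^ d" using Suc.IH by blast
  show ?case
  proof (cases "\<exists>x\<in>U. x k \<noteq> 0")
    case True
    then obtain x1 where "x1 \<in> U" "x1 k \<noteq> 0" by blast
    then have "card U = CARD('a) * card U0"
      unfolding U0_def by (intro card_functional[OF Suc(2) finU]) auto
    then show ?thesis using d by (intro exI[of _ "Suc d"]) simp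
  next
    case False
    then have "U0 = U" unfolding U0_def by blast
    then show ?thesis using d by (intro exI[of _ d]) simp
  qed
qed

definition vdim :: "(nat \<Rightarrow> 'a::{finite,field}) set \<Rightarrow> nat" where
  "vdim U = (THE d. card U = CARD('a) ^ d)"

lemma vdim_eq: "card (U :: (nat \<Rightarrow> 'a::{finite,field}) set) = CARD('a) ^ d \<Longrightarrow> vdim U = d"
  unfolding vdim_def by (rule the_equality) (use power_CARD_inject[where 'a='a] in auto)

lemma card_subspace:
  assumes "is_subspace (U :: (nat \<Rightarrow> 'a::{finite,field}) set)" "U \<subseteq> vecs k"
  shows "card U = CARD('a) ^ vdim U" "vdim U \<le> k"
proof -
  obtain d where "d \<le> k" "card U = CARD('a) ^ d" using card_subspace_power[OF assms] by blast
  moreover have "vdim U = d" using calculation(2) by (rule vdim_eq)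
  ultimately show "card U = CARD('a) ^ vdim U" "vdim U \<le> k" by simp_all
qed

section \<open>Matrices, rank and the rank--nullity count\<close>

text \<open>An m x k matrix is a function on nat x nat vanishing outside {..<m} x {..<k};
  matrix-vector product, column space, null space and rank are taken with respect to k columns.\<close>
definition mats :: "nat \<Rightarrow> nat \<Rightarrow> (nat \<Rightarrow> nat \<Rightarrow> 'a::zero) set" where
  "mats m k = {S. \<forall>i j. m \<le> i \<or> k \<le> j \<longrightarrow> S i j = 0}"

definition mat_vec :: "(nat \<Rightarrow> nat \<Rightarrow> 'a::field) \<Rightarrow> nat \<Rightarrow> (nat \<Rightarrow> 'a) \<Rightarrow> nat \<Rightarrow> 'a" where
  "mat_vec S k x = (\<lambda>i. \<Sum>j<k. S i j * x j)"

definition col_space :: "(nat \<Rightarrow> nat \<Rightarrow> 'a::field) \<Rightarrow> nat \<Rightarrow> (nat \<Rightarrow> 'a) set" where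
  "col_space S k = mat_vec S k ` vecs k"

definition null_space :: "(nat \<Rightarrow> nat \<Rightarrow> 'a::field) \<Rightarrow> nat \<Rightarrow> (nat \<Rightarrow> 'a) set" where
  "null_space S k = {x\<in>vecs k. mat_vec S k x = 0}"

definition mrank :: "(nat \<Rightarrow> nat \<Rightarrow> 'a::{finite,field}) \<Rightarrow> nat \<Rightarrow> nat" where
  "mrank S k = vdim (col_space S k)"

definition dot :: "nat \<Rightarrow> (nat \<Rightarrow> 'a::field) \<Rightarrow> (nat \<Rightarrow> 'a) \<Rightarrow> 'a" where
  "dot k v x = (\<Sum>j<k. v j * x j)"

definition outer :: "(nat \<Rightarrow> 'a::field) \<Rightarrow> (nat \<Rightarrow> 'a) \<Rightarrow> nat \<Rightarrow> nat \<Rightarrow> 'a" where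
  "outer u v = (\<lambda>i j. u i * v j)"

lemma mat_vec_add: "mat_vec S k (x + y) = mat_vec S k x + mat_vec S k y"
  by (simp add: mat_vec_def fun_eq_iff distrib_left sum.distrib)

lemma mat_vec_smul: "mat_vec S k (smul c x) = smul c (mat_vec S k x)"
  by (simp add: mat_vec_def fun_eq_iff sum_distrib_left algebra_simps)

lemma mat_vec_zero [simp]: "mat_vec S k 0 = 0"
  by (simp add: mat_vec_def fun_eq_iff)

lemma mat_vec_diff: "mat_vec S k (x - y) = mat_vec S k x - mat_vec S k y"
  by (simp add: mat_vec_def fun_eq_iff algebra_simps sum_subtractf)

lemma mat_vec_in_vecs: "S \<in> mats m k \<Longrightarrow> mat_vec S k x \<in> vecs m"
  by (simp add: mat_vec_def vecs_def mats_def)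

lemma sum_single: "i < k \<Longrightarrow> (\<Sum>j<k. f j * single i c j) = f i * (c :: 'a::comm_ring_1)"
proof -
  assume "i < k"
  then have "(\<Sum>j<k. f j * single i c j) = (\<Sum>j<k. if j = i then f i * c else 0)"
    by (intro sum.cong) (simp_all add: single_def)
  also have "\<dots> = f i * c" using \<open>i < k\<close> by simp
  finally show ?thesis .
qed

lemma mat_vec_single: "j < k \<Longrightarrow> mat_vec S k (single j 1) = (\<lambda>i. S i j)"
  by (simp add: mat_vec_def sum_single)

lemma dot_add: "dot k v (x + y) = dot k v x + dot k v y"
  by (simp add: dot_def distrib_left sum.distrib)

lemma dot_add_left: "dot k (v + w) x = dot k v x + dot k w x"
  by (simp add: dot_def distrib_right sum.distrib)

lemma dot_smul: "dot k v (smul c x) = c * dot k v x"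
  by (simp add: dot_def sum_distrib_left algebra_simps)

lemma dot_smul_left: "dot k (smul c v) x = c * dot k v x"
  by (simp add: dot_def sum_distrib_left algebra_simps)

lemma dot_diff: "dot k v (x - y) = dot k v x - dot k v y"
  by (simp add: dot_def algebra_simps sum_subtractf)

lemma dot_zero [simp]: "dot k v 0 = 0" "dot k 0 x = 0"
  by (simp_all add: dot_def)

lemma dot_single: "i < k \<Longrightarrow> dot k v (single i c) = v i * c"
  by (simp add: dot_def sum_single)

lemma dot_single_left: "i < k \<Longrightarrow> dot k (single i c) x = c * x i"
  using sum_single[of i k x c] by (simp add: dot_def mult.commute)

lemma mat_vec_outer: "mat_vec (S + outer u v) k x = mat_vec S k x + smul (dot k v x) u"
  by (simp add: mat_vec_def outer_def dot_def fun_eq_iff distrib_right sum.distrib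
      sum_distrib_left algebra_simps)

lemma outer_add_left: "outer (u + w) v = outer u v + outer w v"
  by (simp add: outer_def fun_eq_iff distrib_right)

lemma outer_in_mats: "u \<in> vecs m \<Longrightarrow> v \<in> vecs k \<Longrightarrow> outer u v \<in> mats m k"
  by (auto simp: mats_def vecs_def outer_def)

lemma mats_add: "(S :: nat \<Rightarrow> nat \<Rightarrow> 'a::monoid_add) \<in> mats m k \<Longrightarrow> R \<in> mats m k \<Longrightarrow> S + R \<in> mats m k"
  by (simp add: mats_def)

lemma is_subspace_col_space: "is_subspace (col_space S k)"
  unfolding is_subspace_def col_space_def
proof (intro conjI ballI allI)
  show "0 \<in> mat_vec S k ` vecs k" by (rule image_eqI[where x=0]) auto
  show "x + y \<in> mat_vec S k ` vecs k" if "x \<in> mat_vec S k ` vecs k" "y \<in> mat_vec S k ` vecs k" for x y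
    using that by (auto simp: mat_vec_add[symmetric])
  show "smul c x \<in> mat_vec S k ` vecs k" if "x \<in> mat_vec S k ` vecs k" for c x
    using that by (auto simp: mat_vec_smul[symmetric])
qed

lemma is_subspace_null_space: "is_subspace (null_space S k)"
  unfolding is_subspace_def null_space_def by (auto simp: mat_vec_add mat_vec_smul)

lemma col_space_vecs: "S \<in> mats m k \<Longrightarrow> col_space S k \<subseteq> vecs m"
  by (auto simp: col_space_def mat_vec_in_vecs)

lemma null_space_vecs: "null_space S k \<subseteq> vecs k"
  by (auto simp: null_space_def)

lemma zero_in_null_space: "0 \<in> null_space S k"
  by (simp add: null_space_def)

lemma card_null_space_pos: "0 < card (null_space (S :: nat \<Rightarrow> nat \<Rightarrow> 'a::{finite,field}) k)"
  using finite_subset_vecs[OF null_space_vecs[of S k]] zero_in_null_space[of S k] by (auto simp: card_gt_0_iff)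

lemma card_col_space: "(S :: nat \<Rightarrow> nat \<Rightarrow> 'a::{finite,field}) \<in> mats m k \<Longrightarrow> card (col_space S k) = CARD('a) ^ mrank S k"
  unfolding mrank_def using card_subspace(1)[OF is_subspace_col_space col_space_vecs] by blast

lemma mrank_le_rows: "S \<in> mats m k \<Longrightarrow> mrank (S :: nat \<Rightarrow> nat \<Rightarrow> 'a::{finite,field}) k \<le> m"
  unfolding mrank_def using card_subspace(2)[OF is_subspace_col_space col_space_vecs] by blast

lemma rank_nullity:
  assumes "(S :: nat \<Rightarrow> nat \<Rightarrow> 'a::{finite,field}) \<in> mats m k"
  shows "CARD('a) ^ k = CARD('a) ^ mrank S k * card (null_space S k)"
proof -
  have "card (vecs k :: (nat \<Rightarrow> 'a) set) = card (col_space S k) * card (null_space S k)"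
    unfolding col_space_def null_space_def
    by (rule card_additive[of "vecs k" "mat_vec S k", OF is_subspace_vecs finite_vecs]) (simp add: mat_vec_add)
  then show ?thesis using card_col_space[OF assms] by (simp add: card_vecs)
qed

lemma mrank_le_cols: "S \<in> mats m k \<Longrightarrow> mrank (S :: nat \<Rightarrow> nat \<Rightarrow> 'a::{finite,field}) k \<le> k"
proof -
  assume S: "S \<in> mats m k"
  have "card (col_space S k) \<le> card (vecs k :: (nat \<Rightarrow> 'a) set)"
    unfolding col_space_def by (rule card_image_le[OF finite_vecs])
  then have "CARD('a) ^ mrank S k \<le> CARD('a) ^ k"
    using card_col_space[OF S] card_vecs by metis
  then show ?thesis using CARD_field_ge_2[where 'a='a] by (simp add: power_le_imp_le_exp)
qed

lemma card_null_space: "S \<in> mats m k \<Longrightarrow> card (null_space (S :: nat \<Rightarrow> nat \<Rightarrow> 'a::{finite,field}) k) = CARD('a) ^ (k - mrank S k)"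
proof -
  assume S: "S \<in> mats m k"
  have "CARD('a) ^ mrank S k * CARD('a) ^ (k - mrank S k) = CARD('a) ^ k"
    using mrank_le_cols[OF S] by (simp add: power_add[symmetric])
  then have "CARD('a) ^ mrank S k * CARD('a) ^ (k - mrank S k) = CARD('a) ^ mrank S k * card (null_space S k)"
    using rank_nullity[OF S] by simp
  then show ?thesis by simp
qed

lemma mrank_compare:
  fixes S T :: "nat \<Rightarrow> nat \<Rightarrow> 'a::{finite,field}"
  assumes S: "S \<in> mats m k" and T: "T \<in> mats m' k"
    and card: "CARD('a) ^ a * card (null_space S k) = CARD('a) ^ b * card (null_space T k)"
  shows "mrank S k + b = mrank T k + a"
proof -
  have "CARD('a) ^ (mrank S k + b) * card (null_space T k) = CARD('a) ^ mrank S k * (CARD('a) ^ a * card (null_space S k))"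
    unfolding card by (simp add: power_add)
  also have "\<dots> = CARD('a) ^ a * CARD('a) ^ mrank T k * card (null_space T k)"
    using rank_nullity[OF S] rank_nullity[OF T] by simp
  finally have "CARD('a) ^ (mrank S k + b) = CARD('a) ^ (mrank T k + a)"
    using card_null_space_pos[of T k] by (simp add: power_add)
  then show ?thesis by (simp only: power_CARD_inject)
qed

lemma mrank_zero_iff:
  assumes S: "(S :: nat \<Rightarrow> nat \<Rightarrow> 'a::{finite,field}) \<in> mats m k"
  shows "mrank S k = 0 \<longleftrightarrow> S = 0"
proof
  assume "mrank S k = 0"
  then have "card (col_space S k) = 1" using card_col_space[OF S] by simp
  moreover have "0 \<in> col_space S k" unfolding col_space_def by (rule image_eqI[where x=0]) auto
  ultimately have I: "col_space S k = {0}" by (metis card_1_singletonE singletonD)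
  have "S i j = 0" for i j
  proof (cases "j < k")
    case True
    have "mat_vec S k (single j 1) \<in> col_space S k" unfolding col_space_def using True by blast
    then show ?thesis using I mat_vec_single[OF True, of S] by (metis singletonD zero_fun_def)
  next
    case False
    then show ?thesis using S unfolding mats_def by simp
  qed
  then show "S = 0" by (intro ext) simp
next
  assume "S = 0"
  then have "col_space S k = {0}" by (auto simp: col_space_def mat_vec_def fun_eq_iff intro: image_eqI[where x=0])
  then show "mrank S k = 0" unfolding mrank_def by (intro vdim_eq) simp
qed

definition diag_one :: "nat \<Rightarrow> nat \<Rightarrow> nat \<Rightarrow> nat \<Rightarrow> 'a::{zero,one}" where
  "diag_one m k = (\<lambda>i j. if i = j \<and> i < min m k then 1 else 0)"

lemma diag_one_in_mats: "diag_one m k \<in> mats m k"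
  by (simp add: diag_one_def mats_def)

lemma mrank_diag_one: "mrank (diag_one m k :: nat \<Rightarrow> nat \<Rightarrow> 'a::{finite,field}) k = min m k"
proof -
  have mv: "mat_vec (diag_one m k) k x = (\<lambda>i. if i < min m k then x i else 0)" for x :: "nat \<Rightarrow> 'a"
  proof
    fix i
    show "mat_vec (diag_one m k) k x i = (if i < min m k then x i else 0)"
    proof (cases "i < min m k")
      case True
      then have "mat_vec (diag_one m k) k x i = (\<Sum>j<k. x j * single i 1 j)"
        unfolding mat_vec_def diag_one_def single_def by (intro sum.cong) auto
      then show ?thesis using True by (simp add: sum_single)
    next
      case False
      then have "(diag_one m k i j :: 'a) = 0" for j by (auto simp: diag_one_def)
      then have "mat_vec (diag_one m k) k x i = 0" by (simp add: mat_vec_def)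
      then show ?thesis using False by auto
    qed
  qed
  have "col_space (diag_one m k :: nat \<Rightarrow> nat \<Rightarrow> 'a) k = vecs (min m k)"
  proof
    show "col_space (diag_one m k :: nat \<Rightarrow> nat \<Rightarrow> 'a) k \<subseteq> vecs (min m k)"
    proof
      fix y assume "y \<in> col_space (diag_one m k :: nat \<Rightarrow> nat \<Rightarrow> 'a) k"
      then obtain x where "y = mat_vec (diag_one m k) k x" unfolding col_space_def by blast
      then show "y \<in> vecs (min m k)" unfolding mv vecs_def by auto
    qed
    show "vecs (min m k) \<subseteq> col_space (diag_one m k :: nat \<Rightarrow> nat \<Rightarrow> 'a) k"
    proof
      fix y :: "nat \<Rightarrow> 'a" assume y: "y \<in> vecs (min m k)"
      then have "y \<in> vecs k" unfolding vecs_def by simp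
      moreover have "mat_vec (diag_one m k) k y = y"
        unfolding mv using y unfolding vecs_def by (simp add: fun_eq_iff not_less[symmetric])
      ultimately show "y \<in> col_space (diag_one m k) k" unfolding col_space_def by (metis image_eqI)
    qed
  qed
  then show ?thesis unfolding mrank_def by (intro vdim_eq) (simp add: card_vecs)
qed

lemma bij_mats_vecs:
  assumes k: "0 < k"
  shows "bij_betw (\<lambda>S r. if r < m * k then S (r div k) (r mod k) else 0)
           (mats m k :: (nat \<Rightarrow> nat \<Rightarrow> 'a::zero) set) (vecs (m * k))"
    (is "bij_betw ?f _ _")
proof (rule bij_betwI[where g = "\<lambda>v i j. if i < m \<and> j < k then v (i * k + j) else 0"])
  show "?f \<in> mats m k \<rightarrow> vecs (m * k)" unfolding vecs_def by auto
  show "(\<lambda>v i j. if i < m \<and> j < k then v (i * k + j) else 0) \<in> vecs (m * k) \<rightarrow> mats m k"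
    unfolding mats_def by auto
  show "(\<lambda>i j. if i < m \<and> j < k then ?f S (i * k + j) else 0) = S" if S: "S \<in> mats m k" for S
  proof (intro ext)
    fix i j
    show "(if i < m \<and> j < k then ?f S (i * k + j) else 0) = S i j"
    proof (cases "i < m \<and> j < k")
      case True
      have "(i + 1) * k \<le> m * k" using True by (intro mult_le_mono1) simp
      then show ?thesis using True by simp
    qed (use S in \<open>auto simp: mats_def\<close>)
  qed
  show "?f (\<lambda>i j. if i < m \<and> j < k then v (i * k + j) else 0) = v" if v: "v \<in> vecs (m * k)" for v
  proof (intro ext)
    fix r
    show "?f (\<lambda>i j. if i < m \<and> j < k then v (i * k + j) else 0) r = v r"
    proof (cases "r < m * k")
      case True
      then show ?thesis using k by (simp add: less_mult_imp_div_less)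
    qed (use v in \<open>simp add: vecs_def\<close>)
  qed
qed

lemma finite_mats: "0 < k \<Longrightarrow> finite (mats m k :: (nat \<Rightarrow> nat \<Rightarrow> 'a::{finite,zero}) set)"
  using bij_betw_finite[OF bij_mats_vecs[of k m, where 'a='a]] by simp

lemma card_mats: "0 < k \<Longrightarrow> card (mats m k :: (nat \<Rightarrow> nat \<Rightarrow> 'a::{finite,zero}) set) = CARD('a) ^ (m * k)"
  using bij_betw_same_card[OF bij_mats_vecs[of k m, where 'a='a]] card_vecs[of "m * k", where 'a='a] by simp

section \<open>Hyperplanes and annihilators\<close>

text \<open>For v \<noteq> 0 each level set {z. v . z = c} is a coset of the hyperplane v^\<bottom>, of size q^(k-1).\<close>
lemma card_dot_level:
  fixes v :: "nat \<Rightarrow> 'a::{finite,field}"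
  assumes v: "v \<in> vecs k" "v \<noteq> 0"
  shows "card {z\<in>vecs k. dot k v z = c} = CARD('a) ^ (k - 1)"
proof -
  obtain i where i: "i < k" "v i \<noteq> 0" using vecs_nonzero_coord[OF v] by blast
  have "CARD('a) ^ k = CARD('a) * card {z\<in>vecs k. dot k v z = 0}"
    unfolding card_vecs[symmetric]
    by (rule card_functional[OF is_subspace_vecs finite_vecs _ _ vecs_single[OF i(1)], of "dot k v" 1])
      (simp_all add: dot_add dot_smul dot_single[OF i(1)] i(2))
  moreover have "card {z\<in>vecs k. dot k v z = dot k v (single i (c / v i))} = card {z\<in>vecs k. dot k v z = 0}"
    by (rule card_fibre_additive[OF is_subspace_vecs _ vecs_single[OF i(1)]]) (simp add: dot_add)
  moreover have "dot k v (single i (c / v i)) = c" using i by (simp add: dot_single)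
  moreover have "CARD('a) ^ k = CARD('a) * CARD('a) ^ (k - 1)"
    using i(1) by (simp add: power_eq_if)
  ultimately show ?thesis by simp
qed

lemma card_dot_kernel_left:
  fixes x :: "nat \<Rightarrow> 'a::{finite,field}"
  assumes x: "x \<in> vecs k" "x \<noteq> 0"
  shows "CARD('a) ^ k = CARD('a) * card {v\<in>vecs k. dot k v x = 0}"
proof -
  obtain i where i: "i < k" "x i \<noteq> 0" using vecs_nonzero_coord[OF x] by blast
  show ?thesis
    unfolding card_vecs[symmetric]
    by (rule card_functional[OF is_subspace_vecs finite_vecs _ _ vecs_single[OF i(1)], of "\<lambda>v. dot k v x" 1])
      (simp_all add: dot_add_left dot_smul_left dot_single_left[OF i(1)] i(2))
qed

definition annihilator :: "nat \<Rightarrow> (nat \<Rightarrow> 'a::field) set \<Rightarrow> (nat \<Rightarrow> 'a) set" where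
  "annihilator k U = {v\<in>vecs k. \<forall>x\<in>U. dot k v x = 0}"

lemma annihilator_vecs: "annihilator k U \<subseteq> vecs k"
  by (auto simp: annihilator_def)

lemma zero_in_annihilator: "0 \<in> annihilator k U"
  by (simp add: annihilator_def)

lemma card_filter_eq_sum: "finite A \<Longrightarrow> card {x\<in>A. P x} = (\<Sum>x\<in>A. if P x then 1 else 0)"
  by (simp add: sum.inter_filter[symmetric])

text \<open>Duality |U^\<bottom>| * |U| = q^k, by counting the pairs (v, x) \<in> F_q^k \<times> U with v . x = 0
  once by x (each x \<noteq> 0 is orthogonal to a hyperplane) and once by v (a functional not in U^\<bottom>
  vanishes on a hyperplane of U).\<close>
lemma orthogonal_pairs_by_points:
  assumes U: "is_subspace (U :: (nat \<Rightarrow> 'a::{finite,field}) set)" "U \<subseteq> vecs k"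
  shows "CARD('a) * (\<Sum>v\<in>vecs k. card {x\<in>U. dot k v x = 0}) = CARD('a) * CARD('a) ^ k + (card U - 1) * CARD('a) ^ k"
proof -
  have finU: "finite U" using U(2) by blast
  have "(\<Sum>v\<in>vecs k. card {x\<in>U. dot k v x = 0}) = (\<Sum>v\<in>vecs k. \<Sum>x\<in>U. if dot k v x = 0 then 1 else 0)"
    by (simp add: card_filter_eq_sum[OF finU])
  also have "\<dots> = (\<Sum>x\<in>U. card {v\<in>vecs k. dot k v x = 0})"
    by (subst sum.swap) (simp add: card_filter_eq_sum[OF finite_vecs])
  finally have swap: "(\<Sum>v\<in>vecs k. card {x\<in>U. dot k v x = 0}) = (\<Sum>x\<in>U. card {v\<in>vecs k. dot k v x = 0})" .
  have "CARD('a) * card {v\<in>vecs k. dot k v x = 0} = (if x = 0 then CARD('a) * CARD('a) ^ k else CARD('a) ^ k)"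
    if "x \<in> U" for x
    using that U(2) card_dot_kernel_left[of x k] by (auto simp: card_vecs)
  then have "CARD('a) * (\<Sum>v\<in>vecs k. card {x\<in>U. dot k v x = 0}) = (\<Sum>x\<in>U. if x = 0 then CARD('a) * CARD('a) ^ k else CARD('a) ^ k)"
    unfolding swap sum_distrib_left by (intro sum.cong) auto
  also have "\<dots> = CARD('a) * CARD('a) ^ k + card (U - {0}) * CARD('a) ^ k"
    using is_subspaceD(1)[OF U(1)] by (subst sum.If_cases[OF finU]) (simp add: Diff_eq Int_absorb1)
  also have "\<dots> = CARD('a) * CARD('a) ^ k + (card U - 1) * CARD('a) ^ k"
    using card_Diff_singleton[OF is_subspaceD(1)[OF U(1)]] by simp
  finally show ?thesis .
qed

lemma orthogonal_pairs_by_functionals: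
  assumes U: "is_subspace (U :: (nat \<Rightarrow> 'a::{finite,field}) set)" "U \<subseteq> vecs k"
  shows "CARD('a) * (\<Sum>v\<in>vecs k. card {x\<in>U. dot k v x = 0})
    = card (annihilator k U) * (CARD('a) * card U) + (CARD('a) ^ k - card (annihilator k U)) * card U"
proof -
  have finU: "finite U" using U(2) by blast
  have count: "CARD('a) * card {x\<in>U. dot k v x = 0} = (if v \<in> annihilator k U then CARD('a) * card U else card U)"
    if v: "v \<in> vecs k" for v
  proof (cases "v \<in> annihilator k U")
    case True
    then have "{x\<in>U. dot k v x = 0} = U" unfolding annihilator_def by blast
    then show ?thesis using True by simp
  next
    case False
    then obtain x1 where "x1 \<in> U" "dot k v x1 \<noteq> 0" using v unfolding annihilator_def by blast
    then have "card U = CARD('a) * card {x\<in>U. dot k v x = 0}"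
      by (intro card_functional[where \<phi>="dot k v", OF U(1) finU]) (simp_all add: dot_add dot_smul)
    then show ?thesis using False by simp
  qed
  have "CARD('a) * (\<Sum>v\<in>vecs k. card {x\<in>U. dot k v x = 0})
      = (\<Sum>v\<in>vecs k. if v \<in> annihilator k U then CARD('a) * card U else card U)"
    unfolding sum_distrib_left using count by (intro sum.cong) auto
  also have "\<dots> = (\<Sum>v\<in>annihilator k U. CARD('a) * card U) + (\<Sum>v\<in>vecs k - annihilator k U. card U)"
    using annihilator_vecs[of k U] by (simp add: sum.If_cases Int_absorb1 Diff_eq)
  also have "\<dots> = card (annihilator k U) * (CARD('a) * card U) + (CARD('a) ^ k - card (annihilator k U)) * card U"
    using annihilator_vecs[of k U] by (simp add: card_Diff_subset finite_subset_vecs card_vecs)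
  finally show ?thesis .
qed

text \<open>Comparing the two counts gives |U^\<bottom>| |U| = q^k, because q \<noteq> 1.\<close>
lemma card_annihilator:
  assumes U: "is_subspace (U :: (nat \<Rightarrow> 'a::{finite,field}) set)" "U \<subseteq> vecs k"
  shows "card (annihilator k U) * card U = CARD('a) ^ k"
proof -
  define q where "q = CARD('a)"
  define Q where "Q = CARD('a) ^ k"
  define N where "N = card (annihilator k U)"
  define K where "K = card U"
  have NQ: "N \<le> Q" unfolding N_def Q_def card_vecs[symmetric]
    using annihilator_vecs by (intro card_mono) auto
  have K1: "1 \<le> K" unfolding K_def
    using card_gt_0_iff[of U] finite_subset_vecs[OF U(2)] is_subspaceD(1)[OF U(1)] by auto
  have "q * Q + (K - 1) * Q = N * (q * K) + (Q - N) * K"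
    using orthogonal_pairs_by_points[OF U] orthogonal_pairs_by_functionals[OF U]
    unfolding q_def Q_def N_def K_def by simp
  then have "int (q * Q + (K - 1) * Q) = int (N * (q * K) + (Q - N) * K)" by simp
  then have "int q * int Q + (int K - 1) * int Q = int N * (int q * int K) + (int Q - int N) * int K"
    using NQ K1 by (simp add: of_nat_diff)
  then have "(int q - 1) * (int Q - int N * int K) = 0" by algebra
  moreover have "int q \<noteq> 1" unfolding q_def using CARD_field_ge_2[where 'a='a] by simp
  ultimately have "int Q = int N * int K" by simp
  then show ?thesis unfolding Q_def N_def K_def by (simp flip: of_nat_mult)
qed

section \<open>Rank-one updates\<close>

text \<open>For a fixed m x k matrix S with column space W, null space K and row space K^\<bottom>
  (the annihilator of K), we determine the rank of S + u v^T.  With r = rank S it is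
  r + 1 if u \<notin> W and v \<notin> K^\<bottom>; it is r - 1 if u = S z for some z with v \<in> K^\<bottom> and v . z = -1
  (the value v . z does not depend on the choice of z); and it is r otherwise.\<close>
locale rank_update =
  fixes S :: "nat \<Rightarrow> nat \<Rightarrow> 'a::{finite,field}" and m k :: nat
  assumes S: "S \<in> mats m k"
begin

abbreviation "W \<equiv> col_space S k"
abbreviation "K \<equiv> null_space S k"
abbreviation "Kperp \<equiv> annihilator k K"

lemma card_Kperp: "card Kperp = CARD('a) ^ mrank S k"
  using card_annihilator[OF is_subspace_null_space[of S k] null_space_vecs[of S k]]
    rank_nullity[OF S] card_null_space_pos[of S k] by simp

lemma in_W: "x \<in> vecs k \<Longrightarrow> mat_vec S k x \<in> W"
  unfolding col_space_def by blast

lemma update_in_mats: "u \<in> vecs m \<Longrightarrow> v \<in> vecs k \<Longrightarrow> S + outer u v \<in> mats m k"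
  using S outer_in_mats mats_add by blast

lemma dot_Kperp_const:
  assumes v: "v \<in> Kperp" and z: "z \<in> vecs k" "z' \<in> vecs k" "mat_vec S k z = mat_vec S k z'"
  shows "dot k v z = dot k v z'"
proof -
  have "z - z' \<in> K" unfolding null_space_def using z by (simp add: mat_vec_diff vecs_diff)
  then have "dot k v (z - z') = 0" using v unfolding annihilator_def by blast
  then show ?thesis by (simp add: dot_diff)
qed

lemma null_space_update_outside:
  assumes u: "u \<notin> W"
  shows "null_space (S + outer u v) k = {x\<in>K. dot k v x = 0}"
proof -
  have "mat_vec S k x = 0 \<and> dot k v x = 0" if x: "x \<in> vecs k" and g: "mat_vec (S + outer u v) k x = 0" for x
  proof (cases "dot k v x = 0")
    case True then show ?thesis using g by (simp add: mat_vec_outer)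
  next
    case False
    have "mat_vec S k x + smul (dot k v x) u = 0" using g by (simp add: mat_vec_outer)
    then have "u = mat_vec S k (smul (- 1 / dot k v x) x)"
      using False by (simp add: mat_vec_smul fun_eq_iff field_simps add_eq_0_iff)
    then show ?thesis using u in_W[OF vecs_smul[OF x]] by simp
  qed
  then show ?thesis unfolding null_space_def by (auto simp: mat_vec_outer)
qed

text \<open>If u \<notin> W and v \<notin> K^\<bottom>, the null space shrinks to a hyperplane of K: the rank grows by one.\<close>
lemma rank_update_up:
  assumes u: "u \<in> vecs m" "u \<notin> W" and v: "v \<in> vecs k" "v \<notin> Kperp"
  shows "mrank (S + outer u v) k = mrank S k + 1"
proof -
  obtain x1 where "x1 \<in> K" "dot k v x1 \<noteq> 0" using v unfolding annihilator_def by blast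
  then have "card K = CARD('a) * card {x\<in>K. dot k v x = 0}"
    by (intro card_functional[where \<phi>="dot k v", OF is_subspace_null_space finite_subset_vecs[OF null_space_vecs]])
      (simp_all add: dot_add dot_smul)
  then have "CARD('a) ^ 0 * card K = CARD('a) ^ 1 * card (null_space (S + outer u v) k)"
    using null_space_update_outside[OF u(2)] by simp
  then show ?thesis using mrank_compare[OF S update_in_mats[OF u(1) v(1)], of 0 1] by simp
qed

text \<open>If u \<notin> W and v \<in> K^\<bottom>, the null space does not change.\<close>
lemma rank_update_keep_outside:
  assumes u: "u \<in> vecs m" "u \<notin> W" and v: "v \<in> vecs k" "v \<in> Kperp"
  shows "mrank (S + outer u v) k = mrank S k"
proof -
  have "null_space (S + outer u v) k = K"
    using null_space_update_outside[OF u(2)] v(2) unfolding annihilator_def by blast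
  then show ?thesis using mrank_compare[OF S update_in_mats[OF u(1) v(1)], of 0 0] by simp
qed

text \<open>If u = S z with v . z \<noteq> -1, the column space does not change.\<close>
lemma rank_update_keep_witness:
  assumes z: "z \<in> vecs k" "mat_vec S k z = u" and dz: "dot k v z \<noteq> -1"
  shows "mrank (S + outer u v) k = mrank S k"
proof -
  have "col_space (S + outer u v) k = W"
  proof
    show "col_space (S + outer u v) k \<subseteq> W"
    proof
      fix w assume "w \<in> col_space (S + outer u v) k"
      then obtain x where x: "x \<in> vecs k" "w = mat_vec (S + outer u v) k x" unfolding col_space_def by blast
      then have "w = mat_vec S k (x + smul (dot k v x) z)" using z(2) by (simp add: mat_vec_outer mat_vec_add mat_vec_smul)
      then show "w \<in> W" using in_W x(1) z(1) by blast
    qed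
    show "W \<subseteq> col_space (S + outer u v) k"
    proof
      fix w assume "w \<in> W"
      then obtain y where y: "y \<in> vecs k" "w = mat_vec S k y" unfolding col_space_def by blast
      have e: "1 + dot k v z \<noteq> 0" using dz by (simp add: add_eq_0_iff)
      define t where "t = dot k v y / (1 + dot k v z)"
      define x where "x = y - smul t z"
      have "dot k v x = t" unfolding x_def t_def using e by (simp add: dot_diff dot_smul field_simps)
      then have "mat_vec (S + outer u v) k x = mat_vec S k x + smul t u" by (simp add: mat_vec_outer)
      also have "mat_vec S k x = w - smul t u" unfolding x_def y(2) z(2)[symmetric] by (simp add: mat_vec_diff mat_vec_smul)
      finally have "w = mat_vec (S + outer u v) k x" by (metis diff_add_cancel)
      moreover have "x \<in> vecs k" unfolding x_def using y(1) z(1) by blast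
      ultimately show "w \<in> col_space (S + outer u v) k" unfolding col_space_def by blast
    qed
  qed
  then show ?thesis unfolding mrank_def by simp
qed

text \<open>If u \<in> W and v \<notin> K^\<bottom>, shifting a preimage z of u by a suitable kernel vector
  gives v . z \<noteq> -1, so the rank does not change.\<close>
lemma rank_update_keep_inside:
  assumes u: "u \<in> W" and v: "v \<notin> Kperp" "v \<in> vecs k"
  shows "mrank (S + outer u v) k = mrank S k"
proof -
  obtain z where z: "z \<in> vecs k" "mat_vec S k z = u" using u unfolding col_space_def by blast
  obtain x1 where x1: "x1 \<in> K" "dot k v x1 \<noteq> 0" using v unfolding annihilator_def by blast
  show ?thesis
  proof (cases "dot k v z = -1")
    case False then show ?thesis using rank_update_keep_witness[OF z] by blast
  next
    case True
    have "z + x1 \<in> vecs k" "mat_vec S k (z + x1) = u"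
      using z x1(1) unfolding null_space_def by (auto simp: mat_vec_add)
    moreover have "dot k v (z + x1) \<noteq> -1" using True x1(2) by (simp add: dot_add)
    ultimately show ?thesis using rank_update_keep_witness by blast
  qed
qed

text \<open>If u = S z with v \<in> K^\<bottom> and v . z = -1, the update maps F_q^k onto S(v^\<bottom>), where
  v^\<bottom> is a hyperplane containing K; hence the rank drops by one.\<close>
lemma col_space_update_down:
  assumes z: "z \<in> vecs k" "mat_vec S k z = u" and dz: "dot k v z = -1"
  shows "col_space (S + outer u v) k = mat_vec S k ` {y\<in>vecs k. dot k v y = 0}"
proof
  show "col_space (S + outer u v) k \<subseteq> mat_vec S k ` {y\<in>vecs k. dot k v y = 0}"
  proof
    fix w assume "w \<in> col_space (S + outer u v) k"
    then obtain x where x: "x \<in> vecs k" "w = mat_vec (S + outer u v) k x" unfolding col_space_def by blast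
    then have "w = mat_vec S k (x + smul (dot k v x) z)"
      using z(2) by (simp add: mat_vec_outer mat_vec_add mat_vec_smul)
    moreover have "x + smul (dot k v x) z \<in> {y\<in>vecs k. dot k v y = 0}"
      using x(1) z(1) dz by (auto simp: dot_add dot_smul)
    ultimately show "w \<in> mat_vec S k ` {y\<in>vecs k. dot k v y = 0}" by blast
  qed
  show "mat_vec S k ` {y\<in>vecs k. dot k v y = 0} \<subseteq> col_space (S + outer u v) k"
  proof
    fix w assume "w \<in> mat_vec S k ` {y\<in>vecs k. dot k v y = 0}"
    then obtain y where "y \<in> vecs k" "dot k v y = 0" "w = mat_vec S k y" by blast
    then have "y \<in> vecs k" "w = mat_vec (S + outer u v) k y" by (simp_all add: mat_vec_outer)
    then show "w \<in> col_space (S + outer u v) k" unfolding col_space_def by blast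
  qed
qed

lemma rank_update_down:
  assumes v: "v \<in> vecs k" "v \<in> Kperp" and z: "z \<in> vecs k" "mat_vec S k z = u" and dz: "dot k v z = -1"
  shows "mrank (S + outer u v) k + 1 = mrank S k"
proof -
  define H where "H = {y\<in>vecs k. dot k v y = 0}"
  have "v \<noteq> 0" using dz by auto
  then obtain i where "i < k" using vecs_nonzero_coord[OF v(1)] by blast
  then have H: "CARD('a) ^ k = CARD('a) * card H"
    unfolding H_def card_dot_level[OF v(1) \<open>v \<noteq> 0\<close>] by (cases k) simp_all
  have "is_subspace H" unfolding H_def is_subspace_def by (auto simp: dot_add dot_smul)
  moreover have "{x\<in>H. mat_vec S k x = 0} = K" using v(2) unfolding H_def annihilator_def null_space_def by blast
  ultimately have "card H = card (mat_vec S k ` H) * card K"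
    using card_additive[of H "mat_vec S k"] by (simp add: H_def mat_vec_add)
  also have "mat_vec S k ` H = col_space (S + outer u v) k"
    unfolding H_def using col_space_update_down[OF z dz] by simp
  also have "card (col_space (S + outer u v) k) = CARD('a) ^ mrank (S + outer u v) k"
    using card_col_space[OF update_in_mats[OF _ v(1)]] z in_W col_space_vecs[OF S] by blast
  finally have "CARD('a) ^ k = CARD('a) ^ (mrank (S + outer u v) k + 1) * card K"
    using H by simp
  then have "CARD('a) ^ (mrank (S + outer u v) k + 1) = CARD('a) ^ mrank S k"
    using rank_nullity[OF S] card_null_space_pos[of S k] by simp
  then show ?thesis by (simp only: power_CARD_inject)
qed

lemma rank_update_cases:
  assumes u: "u \<in> vecs m" and v: "v \<in> vecs k"
  shows "mrank (S + outer u v) k = mrank S k + 1 \<longleftrightarrow> u \<notin> W \<and> v \<notin> Kperp"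
    and "mrank (S + outer u v) k + 1 = mrank S k \<longleftrightarrow>
           u \<in> W \<and> v \<in> Kperp \<and> (\<exists>z\<in>vecs k. mat_vec S k z = u \<and> dot k v z = -1)"
    and "mrank (S + outer u v) k \<in> {mrank S k, mrank S k + 1, mrank S k - 1}"
proof -
  let ?T = "mrank (S + outer u v) k" and ?r = "mrank S k"
  let ?down = "u \<in> W \<and> v \<in> Kperp \<and> (\<exists>z\<in>vecs k. mat_vec S k z = u \<and> dot k v z = -1)"
  have up: "?T = ?r + 1" if "u \<notin> W" "v \<notin> Kperp"
    by (rule rank_update_up[OF u that(1) v that(2)])
  have down: "?T + 1 = ?r" if d: ?down
  proof -
    obtain z where "v \<in> Kperp" "z \<in> vecs k" "mat_vec S k z = u" "dot k v z = -1" using d by blast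
    then show ?thesis by (rule rank_update_down[OF v])
  qed
  have same: "?T = ?r" if "\<not> (u \<notin> W \<and> v \<notin> Kperp)" "\<not> ?down"
  proof (cases "u \<in> W")
    case False
    then have "v \<in> Kperp" using that(1) by blast
    with False show ?thesis by (intro rank_update_keep_outside[OF u _ v])
  next
    case True
    then obtain z where z: "z \<in> vecs k" "mat_vec S k z = u" unfolding col_space_def by blast
    show ?thesis
    proof (cases "v \<in> Kperp")
      case True
      then have "dot k v z \<noteq> -1" using z that(2) \<open>u \<in> W\<close> by blast
      then show ?thesis by (rule rank_update_keep_witness[OF z])
    next
      case False
      then show ?thesis by (rule rank_update_keep_inside[OF \<open>u \<in> W\<close> _ v])
    qed
  qed
  consider "u \<notin> W \<and> v \<notin> Kperp" | "?down" | "\<not> (u \<notin> W \<and> v \<notin> Kperp)" "\<not> ?down"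
    by blast
  then show "?T = ?r + 1 \<longleftrightarrow> u \<notin> W \<and> v \<notin> Kperp" and "?T + 1 = ?r \<longleftrightarrow> ?down"
    and "?T \<in> {?r, ?r + 1, ?r - 1}"
    by (cases; use up down same in simp)+
qed

lemma card_pairs_up:
  "card {(u, v). u \<in> vecs m \<and> v \<in> vecs k \<and> mrank (S + outer u v) k = mrank S k + 1}
     = (CARD('a) ^ m - CARD('a) ^ mrank S k) * (CARD('a) ^ k - CARD('a) ^ mrank S k)"
proof -
  have "{(u, v). u \<in> vecs m \<and> v \<in> vecs k \<and> mrank (S + outer u v) k = mrank S k + 1}
      = (vecs m - W) \<times> (vecs k - Kperp)"
    using rank_update_cases(1) by blast
  moreover have "card (vecs m - W) = CARD('a) ^ m - CARD('a) ^ mrank S k"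
    using card_Diff_subset[OF finite_subset_vecs[OF col_space_vecs[OF S]] col_space_vecs[OF S]]
    by (simp add: card_vecs card_col_space[OF S])
  moreover have "card (vecs k - Kperp) = CARD('a) ^ k - CARD('a) ^ mrank S k"
    using card_Diff_subset[OF finite_subset_vecs[OF annihilator_vecs[of k K]] annihilator_vecs[of k K]]
    by (simp add: card_vecs card_Kperp)
  ultimately show ?thesis by (simp add: card_cartesian_product)
qed

text \<open>The rank-lowering pairs are parametrised by the pairs (v, z) with v \<in> K^\<bottom> and v . z = -1,
  via (v, z) \<mapsto> (S z, v); each pair arises from card K choices of z.\<close>
definition down_witnesses :: "((nat \<Rightarrow> 'a) \<times> (nat \<Rightarrow> 'a)) set" where
  "down_witnesses = Sigma Kperp (\<lambda>v. {z\<in>vecs k. dot k v z = -1})"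

lemma down_witnesses_image:
  "(\<lambda>(v, z). (mat_vec S k z, v)) ` down_witnesses
     = {(u, v). u \<in> vecs m \<and> v \<in> vecs k \<and> mrank (S + outer u v) k + 1 = mrank S k}"
proof
  show "(\<lambda>(v, z). (mat_vec S k z, v)) ` down_witnesses
     \<subseteq> {(u, v). u \<in> vecs m \<and> v \<in> vecs k \<and> mrank (S + outer u v) k + 1 = mrank S k}"
    using rank_update_down annihilator_vecs mat_vec_in_vecs[OF S]
    unfolding down_witnesses_def by fastforce
  show "{(u, v). u \<in> vecs m \<and> v \<in> vecs k \<and> mrank (S + outer u v) k + 1 = mrank S k}
     \<subseteq> (\<lambda>(v, z). (mat_vec S k z, v)) ` down_witnesses"
  proof clarify
    fix u v assume uv: "u \<in> vecs m" "v \<in> vecs k" "mrank (S + outer u v) k + 1 = mrank S k"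
    then obtain z where z: "v \<in> Kperp" "z \<in> vecs k" "mat_vec S k z = u" "dot k v z = -1"
      using rank_update_cases(2)[OF uv(1,2)] by blast
    then show "(u, v) \<in> (\<lambda>(v, z). (mat_vec S k z, v)) ` down_witnesses"
      unfolding down_witnesses_def by (intro image_eqI[where x="(v, z)"]) auto
  qed
qed

lemma down_witnesses_fibre:
  assumes "p \<in> (\<lambda>(v, z). (mat_vec S k z, v)) ` down_witnesses"
  shows "card {w\<in>down_witnesses. (\<lambda>(v, z). (mat_vec S k z, v)) w = p} = card K"
proof -
  obtain v z where vz: "v \<in> Kperp" "z \<in> vecs k" "dot k v z = -1" "p = (mat_vec S k z, v)"
    using assms unfolding down_witnesses_def by auto
  have "{w\<in>down_witnesses. (\<lambda>(v, z). (mat_vec S k z, v)) w = p}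
      = Pair v ` {z'\<in>vecs k. mat_vec S k z' = mat_vec S k z}"
  proof
    show "{w\<in>down_witnesses. (\<lambda>(v, z). (mat_vec S k z, v)) w = p}
      \<subseteq> Pair v ` {z'\<in>vecs k. mat_vec S k z' = mat_vec S k z}"
      unfolding down_witnesses_def vz(4) by auto
    show "Pair v ` {z'\<in>vecs k. mat_vec S k z' = mat_vec S k z}
      \<subseteq> {w\<in>down_witnesses. (\<lambda>(v, z). (mat_vec S k z, v)) w = p}"
    proof clarify
      fix z' assume z': "z' \<in> vecs k" "mat_vec S k z' = mat_vec S k z"
      then have "dot k v z' = -1" using dot_Kperp_const[OF vz(1) z'(1) vz(2) z'(2)] vz(3) by simp
      then show "(v, z') \<in> down_witnesses \<and> (mat_vec S k z', v) = p"
        unfolding down_witnesses_def using vz z' by simp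
    qed
  qed
  then have "card {w\<in>down_witnesses. (\<lambda>(v, z). (mat_vec S k z, v)) w = p}
      = card {z'\<in>vecs k. mat_vec S k z' = mat_vec S k z}"
    by (simp add: card_image inj_on_def)
  also have "\<dots> = card K"
    unfolding null_space_def
    by (rule card_fibre_additive[OF is_subspace_vecs _ vz(2)]) (simp add: mat_vec_add)
  finally show ?thesis .
qed

lemma card_down_witnesses: "card down_witnesses = (CARD('a) ^ mrank S k - 1) * CARD('a) ^ (k - 1)"
proof -
  have "card down_witnesses = (\<Sum>v\<in>Kperp. card {z\<in>vecs k. dot k v z = -1})"
    unfolding down_witnesses_def
    using finite_subset_vecs[OF annihilator_vecs[of k K]] by (subst card_SigmaI) auto
  also have "\<dots> = (\<Sum>v\<in>Kperp. if v = 0 then 0 else CARD('a) ^ (k - 1))"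
  proof (rule sum.cong)
    fix v assume "v \<in> Kperp"
    then have "v \<in> vecs k" using annihilator_vecs by blast
    then show "card {z\<in>vecs k. dot k v z = -1} = (if v = 0 then 0 else CARD('a) ^ (k - 1))"
      using card_dot_level[of v k "-1"] by simp
  qed simp
  also have "\<dots> = (\<Sum>v\<in>Kperp - {0}. CARD('a) ^ (k - 1))"
    by (subst sum.If_cases[OF finite_subset_vecs[OF annihilator_vecs[of k K]]]) (simp add: Diff_eq)
  also have "\<dots> = (CARD('a) ^ mrank S k - 1) * CARD('a) ^ (k - 1)"
    using card_Diff_singleton[OF zero_in_annihilator[of k K]] card_Kperp by simp
  finally show ?thesis .
qed

lemma card_pairs_down:
  "card {(u, v). u \<in> vecs m \<and> v \<in> vecs k \<and> mrank (S + outer u v) k + 1 = mrank S k}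
     = (CARD('a) ^ mrank S k - 1) * CARD('a) ^ (mrank S k - 1)"
proof -
  let ?r = "mrank S k"
  have fin: "finite down_witnesses"
    unfolding down_witnesses_def using finite_subset_vecs[OF annihilator_vecs[of k K]] by auto
  have "card down_witnesses
      = card {(u, v). u \<in> vecs m \<and> v \<in> vecs k \<and> mrank (S + outer u v) k + 1 = ?r} * card K"
    using card_fibres[OF fin down_witnesses_fibre] down_witnesses_image by simp
  then have eq: "card {(u, v). u \<in> vecs m \<and> v \<in> vecs k \<and> mrank (S + outer u v) k + 1 = ?r} * CARD('a) ^ (k - ?r)
      = (CARD('a) ^ ?r - 1) * CARD('a) ^ (k - 1)"
    using card_down_witnesses card_null_space[OF S] by simp
  have "k - 1 = (?r - 1) + (k - ?r) \<or> ?r = 0" using mrank_le_cols[OF S] by auto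
  then have "(CARD('a) ^ ?r - 1) * CARD('a) ^ (k - 1) = (CARD('a) ^ ?r - 1) * CARD('a) ^ (?r - 1) * CARD('a) ^ (k - ?r)"
    by (auto simp: power_add)
  with eq have "card {(u, v). u \<in> vecs m \<and> v \<in> vecs k \<and> mrank (S + outer u v) k + 1 = ?r} * CARD('a) ^ (k - ?r)
      = (CARD('a) ^ ?r - 1) * CARD('a) ^ (?r - 1) * CARD('a) ^ (k - ?r)" by simp
  then show ?thesis by simp
qed

end

section \<open>Rank-one matrices\<close>

definition rank_one :: "nat \<Rightarrow> nat \<Rightarrow> (nat \<Rightarrow> nat \<Rightarrow> 'a::field) set" where
  "rank_one m k = (\<lambda>(u, v). outer u v) ` ((vecs m - {0}) \<times> (vecs k - {0}))"

lemma outer_zero [simp]: "outer 0 v = 0" "outer u 0 = 0"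
  by (simp_all add: outer_def fun_eq_iff)

lemma rank_one_in_mats: "R \<in> rank_one m k \<Longrightarrow> R \<in> mats m k"
  unfolding rank_one_def by (auto simp: mats_def vecs_def outer_def)

lemma rank_one_nonzero:
  assumes "R \<in> rank_one m k" shows "R \<noteq> (0 :: nat \<Rightarrow> nat \<Rightarrow> 'a::field)"
proof -
  obtain u v where uv: "u \<in> vecs m" "u \<noteq> 0" "v \<in> vecs k" "v \<noteq> 0" "R = outer u v"
    using assms unfolding rank_one_def by auto
  obtain i j where "u i \<noteq> 0" "v j \<noteq> 0"
    using vecs_nonzero_coord[OF uv(1,2)] vecs_nonzero_coord[OF uv(3,4)] by metis
  then have "R i j \<noteq> 0" using uv(5) by (simp add: outer_def)
  then show ?thesis by auto
qed

lemma outer_eq: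
  fixes u v u' v' :: "nat \<Rightarrow> 'a::field"
  assumes nz: "u \<noteq> 0" "v \<noteq> 0" and eq: "outer u' v' = outer u v"
  shows "\<exists>c. c \<noteq> 0 \<and> u' = smul c u \<and> v' = smul (1 / c) v"
proof -
  have e: "u' a * v' b = u a * v b" for a b using fun_cong[OF fun_cong[OF eq, of a], of b] by (simp add: outer_def)
  obtain i j where i: "u i \<noteq> 0" and j: "v j \<noteq> 0" using nz by (auto simp: fun_eq_iff)
  have "u' i * v' j \<noteq> 0" using e[of i j] i j by simp
  then have vj: "v' j \<noteq> 0" by auto
  define c where "c = v j / v' j"
  have c: "c \<noteq> 0" unfolding c_def using j vj by simp
  have u': "u' = smul c u"
  proof
    fix a show "u' a = smul c u a" using e[of a j] vj unfolding c_def by (simp add: field_simps)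
  qed
  have v': "v' = smul (1 / c) v"
  proof
    fix b
    have "c * u i * v' b = u i * v b" using e[of i b] u' by simp
    then show "v' b = smul (1 / c) v b" using i c by (simp add: field_simps)
  qed
  show ?thesis using c u' v' by blast
qed

text \<open>Each rank-one matrix u v^T arises from exactly q - 1 factorisations (c u, c^-1 v).\<close>
lemma card_outer_fibre:
  fixes u v :: "nat \<Rightarrow> 'a::{finite,field}"
  assumes u: "u \<in> vecs m" "u \<noteq> 0" and v: "v \<in> vecs k" "v \<noteq> 0"
  shows "card {p \<in> (vecs m - {0}) \<times> (vecs k - {0}). outer (fst p) (snd p) = outer u v} = CARD('a) - 1"
proof -
  define f where "f = (\<lambda>c::'a. (smul c u, smul (1 / c) v))"
  have "{p \<in> (vecs m - {0}) \<times> (vecs k - {0}). outer (fst p) (snd p) = outer u v} = f ` (UNIV - {0})"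
  proof
    show "{p \<in> (vecs m - {0}) \<times> (vecs k - {0}). outer (fst p) (snd p) = outer u v} \<subseteq> f ` (UNIV - {0})"
      using outer_eq[OF u(2) v(2)] unfolding f_def by fastforce
    show "f ` (UNIV - {0}) \<subseteq> {p \<in> (vecs m - {0}) \<times> (vecs k - {0}). outer (fst p) (snd p) = outer u v}"
      unfolding f_def using u v smul_nonzero[of _ u] smul_nonzero[of _ v]
      by (auto simp: outer_def fun_eq_iff)
  qed
  moreover have "inj_on f (UNIV - {0})"
  proof
    fix c c' assume "f c = f c'"
    then show "c = c'" using smul_cancel[OF u(2)] unfolding f_def by simp
  qed
  ultimately show ?thesis by (simp add: card_image card_Diff_singleton)
qed

lemma card_pairs_rank_one:
  fixes P :: "(nat \<Rightarrow> nat \<Rightarrow> 'a::{finite,field}) \<Rightarrow> bool"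
  shows "card {p \<in> (vecs m - {0}) \<times> (vecs k - {0}). P (outer (fst p) (snd p))}
     = card {R \<in> rank_one m k. P R} * (CARD('a) - 1)"
proof -
  let ?X = "{p \<in> (vecs m - {0}) \<times> (vecs k - {0}). P (outer (fst p) (snd p))}"
  have "(\<lambda>p. outer (fst p) (snd p)) ` ?X = {R \<in> rank_one m k. P R}"
    unfolding rank_one_def by force
  moreover have "card {p\<in>?X. outer (fst p) (snd p) = R} = CARD('a) - 1"
    if R: "R \<in> (\<lambda>p. outer (fst p) (snd p)) ` ?X" for R :: "nat \<Rightarrow> nat \<Rightarrow> 'a"
  proof -
    obtain u v where uv: "u \<in> vecs m" "u \<noteq> 0" "v \<in> vecs k" "v \<noteq> 0" "P R" "R = outer u v"
      using R by (auto simp: image_iff)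
    then have "{p\<in>?X. outer (fst p) (snd p) = R}
        = {p \<in> (vecs m - {0}) \<times> (vecs k - {0}). outer (fst p) (snd p) = outer u v}" by auto
    then show ?thesis using card_outer_fibre[OF uv(1-4)] by simp
  qed
  moreover have "finite ?X" by auto
  ultimately show ?thesis using card_fibres[of ?X "\<lambda>p. outer (fst p) (snd p)"] by simp
qed

context rank_update
begin

lemma count_rank_one_up:
  "card {R \<in> rank_one m k. mrank (S + R) k = mrank S k + 1} * (CARD('a) - 1)
     = (CARD('a) ^ m - CARD('a) ^ mrank S k) * (CARD('a) ^ k - CARD('a) ^ mrank S k)"
proof -
  have "{p \<in> (vecs m - {0}) \<times> (vecs k - {0}). mrank (S + outer (fst p) (snd p)) k = mrank S k + 1}
     = {(u, v). u \<in> vecs m \<and> v \<in> vecs k \<and> mrank (S + outer u v) k = mrank S k + 1}"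
    by auto
  then show ?thesis
    using card_pairs_rank_one[of m k "\<lambda>R. mrank (S + R) k = mrank S k + 1"] card_pairs_up by simp
qed

lemma count_rank_one_down:
  "card {R \<in> rank_one m k. mrank (S + R) k + 1 = mrank S k} * (CARD('a) - 1)
     = (CARD('a) ^ mrank S k - 1) * CARD('a) ^ (mrank S k - 1)"
proof -
  have "{p \<in> (vecs m - {0}) \<times> (vecs k - {0}). mrank (S + outer (fst p) (snd p)) k + 1 = mrank S k}
     = {(u, v). u \<in> vecs m \<and> v \<in> vecs k \<and> mrank (S + outer u v) k + 1 = mrank S k}"
    by auto
  then show ?thesis
    using card_pairs_rank_one[of m k "\<lambda>R. mrank (S + R) k + 1 = mrank S k"] card_pairs_down by simp
qed

lemma rank_one_update_cases:
  "R \<in> rank_one m k \<Longrightarrow> mrank (S + R) k \<in> {mrank S k, mrank S k + 1, mrank S k - 1}"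
  unfolding rank_one_def using rank_update_cases(3) by auto

lemma exists_rank_one_down:
  assumes "1 \<le> mrank S k"
  shows "\<exists>R \<in> rank_one m k. mrank (S + R) k + 1 = mrank S k"
proof (rule ccontr)
  assume "\<not> ?thesis"
  then have "{R \<in> rank_one m k. mrank (S + R) k + 1 = mrank S k} = {}" by blast
  then have "card {R \<in> rank_one m k. mrank (S + R) k + 1 = mrank S k} = 0" by (simp only: card.empty)
  then have "(CARD('a) ^ mrank S k - 1) * CARD('a) ^ (mrank S k - 1) = 0"
    using count_rank_one_down by simp
  moreover have "2 ^ mrank S k \<le> CARD('a) ^ mrank S k"
    using CARD_field_ge_2[where 'a='a] by (simp add: power_mono)
  moreover have "(2::nat) \<le> 2 ^ mrank S k" using assms by (metis power_one_right power_increasing one_le_numeral)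
  ultimately show False by simp
qed

end

section \<open>Hamming parity check matrices\<close>

definition col :: "(nat \<Rightarrow> nat \<Rightarrow> 'a::zero) \<Rightarrow> nat \<Rightarrow> nat \<Rightarrow> nat \<Rightarrow> 'a" where
  "col M m j = (\<lambda>i. if i < m then M i j else 0)"

lemma col_vecs: "col M m j \<in> vecs m"
  by (simp add: col_def vecs_def)

lemma hamming_col_nonzero:
  assumes "hamming_pcm M m n" "j < n" shows "col M m j \<noteq> 0"
proof
  assume c: "col M m j = 0"
  obtain i where "i < m" "M i j \<noteq> 0" using assms unfolding hamming_pcm_def by blast
  then show False using fun_cong[OF c, of i] by (simp add: col_def)
qed

lemma hamming_col_exists:
  assumes h: "hamming_pcm M m n" and u: "u \<in> vecs m" "u \<noteq> 0"
  shows "\<exists>j<n. \<exists>c. c \<noteq> 0 \<and> col M m j = smul c u"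
proof -
  obtain i where "i < m" "u i \<noteq> 0" using vecs_nonzero_coord[OF u] by blast
  then obtain j c where j: "j < n" "c \<noteq> 0" "\<forall>i<m. M i j = c * u i"
    using h u(1) unfolding hamming_pcm_def by blast
  then have "col M m j = smul c u"
    using u(1) by (auto simp: col_def vecs_def fun_eq_iff)
  then show ?thesis using j by blast
qed

lemma hamming_col_unique:
  assumes h: "hamming_pcm M m n" and j: "j < n" "j' < n" and c: "c \<noteq> 0"
    and e: "col M m j' = smul c (col M m j)"
  shows "j' = j"
proof -
  let ?v = "col M m j"
  obtain i where "i < m" "?v i \<noteq> 0" using vecs_nonzero_coord[OF col_vecs hamming_col_nonzero[OF h j(1)]] by blast
  then have "\<exists>!jj. jj < n \<and> (\<exists>c. c \<noteq> 0 \<and> (\<forall>i<m. M i jj = c * ?v i))"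
    using h col_vecs unfolding hamming_pcm_def by blast
  moreover have "\<forall>i<m. M i j = 1 * ?v i" by (simp add: col_def)
  moreover have "\<forall>i<m. M i j' = c * ?v i"
    using e by (metis (no_types) col_def smul_simps(7))
  ultimately show ?thesis using j c by (metis one_neq_zero)
qed

text \<open>For m \<ge> 2 some three columns of a Hamming parity check matrix are linearly dependent:
  the columns representing e_0, e_1 and e_0 + e_1.\<close>
lemma hamming_dependent_columns:
  assumes h: "hamming_pcm M m n" and m: "2 \<le> m"
  shows "\<exists>j1 j2 j3 c1 c2 c3. j1 < n \<and> j2 < n \<and> j3 < n \<and> j1 \<noteq> j2 \<and> j1 \<noteq> j3 \<and> j2 \<noteq> j3 \<and>
    c1 \<noteq> 0 \<and> c2 \<noteq> 0 \<and> c3 \<noteq> 0 \<and>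
    smul c1 (col M m j1) + smul c2 (col M m j2) + smul c3 (col M m j3) = 0"
proof -
  define e0 e1 where "e0 = (single 0 1 :: nat \<Rightarrow> 'a)" and "e1 = (single 1 1 :: nat \<Rightarrow> 'a)"
  have e: "e0 0 = 1" "e0 1 = 0" "e1 0 = 0" "e1 1 = 1" unfolding e0_def e1_def single_def by simp_all
  have v: "e0 \<in> vecs m" "e1 \<in> vecs m" "e0 + e1 \<in> vecs m"
    unfolding e0_def e1_def using m by (auto intro!: vecs_add vecs_single)
  have nz: "e0 \<noteq> 0" "e1 \<noteq> 0" "e0 + e1 \<noteq> 0"
    using e by (metis zero_fun_apply one_neq_zero, metis zero_fun_apply one_neq_zero,
        metis plus_fun_apply add_0_right zero_fun_apply one_neq_zero)
  obtain j1 d1 where j1: "j1 < n" "d1 \<noteq> 0" "col M m j1 = smul d1 e0" using hamming_col_exists[OF h v(1) nz(1)] by blast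
  obtain j2 d2 where j2: "j2 < n" "d2 \<noteq> 0" "col M m j2 = smul d2 e1" using hamming_col_exists[OF h v(2) nz(2)] by blast
  obtain j3 d3 where j3: "j3 < n" "d3 \<noteq> 0" "col M m j3 = smul d3 (e0 + e1)" using hamming_col_exists[OF h v(3) nz(3)] by blast
  have "j1 \<noteq> j2"
  proof
    assume "j1 = j2"
    then have "smul d1 e0 0 = smul d2 e1 0" using j1(3) j2(3) by simp
    then show False using e j1(2) by simp
  qed
  moreover have "j1 \<noteq> j3"
  proof
    assume "j1 = j3"
    then have "smul d1 e0 1 = smul d3 (e0 + e1) 1" using j1(3) j3(3) by simp
    then show False using e j3(2) by simp
  qed
  moreover have "j2 \<noteq> j3"
  proof
    assume "j2 = j3"
    then have "smul d2 e1 0 = smul d3 (e0 + e1) 0" using j2(3) j3(3) by simp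
    then show False using e j3(2) by simp
  qed
  moreover have "smul (1 / d1) (col M m j1) + smul (1 / d2) (col M m j2) + smul (- 1 / d3) (col M m j3) = 0"
    using j1 j2 j3 by (simp add: fun_eq_iff field_simps)
  ultimately show ?thesis using j1(1,2) j2(1,2) j3(1,2)
    by (intro exI[of _ j1] exI[of _ j2] exI[of _ j3] exI[of _ "1 / d1"] exI[of _ "1 / d2"] exI[of _ "- 1 / d3"])
      simp
qed

section \<open>Arithmetic of the Gaussian numbers (q^l - 1) / (q - 1)\<close>

lemma power_minus_one_nat: "(q::nat) ^ l - 1 = (q - 1) * (\<Sum>i<l. q ^ i)"
proof (cases "q = 0")
  case True
  then show ?thesis by (cases l) simp_all
next
  case False
  then have "int (q ^ l - 1) = int (q - 1) * int (\<Sum>i<l. q ^ i)"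
    using power_diff_1_eq[of "int q" l] by (simp add: of_nat_diff)
  then show ?thesis by (simp only: of_nat_mult[symmetric] of_nat_eq_iff)
qed

lemma power_minus_one_div: "(q::nat) ^ l - 1 = (q - 1) * ((q ^ l - 1) div (q - 1))"
  by (metis power_minus_one_nat dvd_mult_div_cancel dvd_triv_left)

lemma power_diff_div:
  assumes "(l::nat) \<le> m"
  shows "(q::nat) ^ m - q ^ l = (q - 1) * ((q ^ m - 1) div (q - 1) - (q ^ l - 1) div (q - 1))"
proof (cases "q = 0")
  case False
  then have "q ^ l \<le> q ^ m" "1 \<le> q ^ l" using assms by (simp_all add: power_increasing)
  then have "q ^ m - q ^ l = (q ^ m - 1) - (q ^ l - 1)" by simp
  then show ?thesis using power_minus_one_div[of q m] power_minus_one_div[of q l]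
    by (simp add: diff_mult_distrib2)
qed (use assms in \<open>simp add: power_0_left\<close>)

lemma hamming_redundancy_ge_2:
  assumes "2 \<le> (q::nat)" "3 \<le> (q ^ m - 1) div (q - 1)" shows "2 \<le> m"
proof (rule ccontr)
  assume "\<not> 2 \<le> m"
  then have "m = 0 \<or> m = 1" by auto
  then show False using assms by auto
qed

section \<open>The code with parity check matrix A \<otimes> B\<close>

text \<open>Coordinate s < na * nb of a word corresponds to the column pair (s div nb, s mod nb).
  Row r < ma * mb of A \<otimes> B corresponds to (r div mb, r mod mb), so the syndrome of a word x
  is the ma x mb matrix A X B^T, X being x arranged as an na x nb matrix.\<close>
locale kron_hamming =
  fixes A B :: "nat \<Rightarrow> nat \<Rightarrow> 'a::{finite,field}" and ma mb na nb :: nat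
  assumes hA: "hamming_pcm A ma na" and hB: "hamming_pcm B mb nb"
    and nb_pos: "0 < nb" and mb_pos: "0 < mb"
begin

abbreviation "n \<equiv> na * nb"

definition syndrome :: "(nat \<Rightarrow> 'a) \<Rightarrow> nat \<Rightarrow> nat \<Rightarrow> 'a" where
  "syndrome x = (\<lambda>i j. if i < ma \<and> j < mb then \<Sum>s<n. A i (s div nb) * B j (s mod nb) * x s else 0)"

definition weight :: "(nat \<Rightarrow> 'a) \<Rightarrow> nat" where
  "weight z = card {i. i < n \<and> z i \<noteq> 0}"

definition code :: "(nat \<Rightarrow> 'a) set" where
  "code = kernel_code (kron A B mb nb) (ma * mb) n"

lemma syndrome_in_mats: "syndrome x \<in> mats ma mb"
  by (simp add: syndrome_def mats_def)

lemma syndrome_add: "syndrome (x + y) = syndrome x + syndrome y"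
  by (simp add: syndrome_def fun_eq_iff distrib_left sum.distrib)

lemma syndrome_zero [simp]: "syndrome 0 = 0"
  by (simp add: syndrome_def fun_eq_iff)

lemma syndrome_diff: "syndrome (x - y) = syndrome x - syndrome y"
  by (simp add: syndrome_def fun_eq_iff algebra_simps sum_subtractf)

lemma syndrome_smul: "syndrome (smul c x) = (\<lambda>i j. c * syndrome x i j)"
  by (simp add: syndrome_def fun_eq_iff sum_distrib_left algebra_simps)

lemma position_split: "s < n \<Longrightarrow> s div nb < na \<and> s mod nb < nb"
  using nb_pos by (simp add: less_mult_imp_div_less)

lemma position_join: "j < na \<Longrightarrow> j' < nb \<Longrightarrow> j * nb + j' < n \<and> (j * nb + j') div nb = j \<and> (j * nb + j') mod nb = j'"
proof -
  assume "j < na" "j' < nb"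
  moreover have "(j + 1) * nb \<le> na * nb" using \<open>j < na\<close> by (intro mult_le_mono1) simp
  ultimately show ?thesis by simp
qed

lemma syndrome_single:
  assumes s: "s < n"
  shows "syndrome (single s c) = outer (smul c (col A ma (s div nb))) (col B mb (s mod nb))"
proof (intro ext)
  fix i j
  show "syndrome (single s c) i j = outer (smul c (col A ma (s div nb))) (col B mb (s mod nb)) i j"
    using sum_single[OF s, of "\<lambda>t. A i (t div nb) * B j (t mod nb)" c]
    by (auto simp: syndrome_def outer_def col_def)
qed

lemma syndrome_single_rank_one:
  assumes s: "s < n" and c: "c \<noteq> 0"
  shows "syndrome (single s c) \<in> rank_one ma mb"
proof -
  have "smul c (col A ma (s div nb)) \<in> vecs ma - {0}"
    using smul_nonzero[OF c hamming_col_nonzero[OF hA]] position_split[OF s] col_vecs by blast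
  moreover have "col B mb (s mod nb) \<in> vecs mb - {0}"
    using hamming_col_nonzero[OF hB] position_split[OF s] col_vecs by blast
  ultimately show ?thesis unfolding syndrome_single[OF s] rank_one_def by blast
qed

lemma rank_one_syndrome_single:
  assumes R: "R \<in> rank_one ma mb"
  shows "\<exists>s<n. \<exists>c. c \<noteq> 0 \<and> R = syndrome (single s c)"
proof -
  obtain u v where u: "u \<in> vecs ma" "u \<noteq> 0" and v: "v \<in> vecs mb" "v \<noteq> 0" and R: "R = outer u v"
    using assms unfolding rank_one_def by auto
  obtain j c where j: "j < na" "c \<noteq> 0" "col A ma j = smul c u" using hamming_col_exists[OF hA u] by blast
  obtain j' d where j': "j' < nb" "d \<noteq> 0" "col B mb j' = smul d v" using hamming_col_exists[OF hB v] by blast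
  define s where "s = j * nb + j'"
  have s: "s < n" "s div nb = j" "s mod nb = j'" using position_join[OF j(1) j'(1)] unfolding s_def by auto
  have "R = syndrome (single s (1 / (c * d)))"
    unfolding syndrome_single[OF s(1)] s(2,3) j(3) j'(3) R using j(2) j'(2)
    by (simp add: outer_def fun_eq_iff field_simps)
  moreover have "1 / (c * d) \<noteq> 0" using j(2) j'(2) by simp
  ultimately show ?thesis using s(1) by blast
qed

lemma syndrome_single_inj:
  assumes s: "s < n" "s' < n" and c: "c \<noteq> 0" "c' \<noteq> 0"
    and eq: "syndrome (single s c) = syndrome (single s' c')"
  shows "s = s' \<and> c = c'"
proof -
  let ?a = "col A ma (s div nb)" and ?a' = "col A ma (s' div nb)"
  let ?b = "col B mb (s mod nb)" and ?b' = "col B mb (s' mod nb)"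
  have anz: "?a \<noteq> 0" "?a' \<noteq> 0" and bnz: "?b \<noteq> 0"
    using hamming_col_nonzero[OF hA] hamming_col_nonzero[OF hB] position_split[OF s(1)]
      position_split[OF s(2)] by auto
  have "outer (smul c' ?a') ?b' = outer (smul c ?a) ?b"
    using eq unfolding syndrome_single[OF s(1)] syndrome_single[OF s(2)] by simp
  then obtain e where e: "e \<noteq> 0" "smul c' ?a' = smul e (smul c ?a)" "?b' = smul (1 / e) ?b"
    using outer_eq[OF smul_nonzero[OF c(1) anz(1)] bnz] by blast
  have "s' mod nb = s mod nb"
    using hamming_col_unique[OF hB _ _ _ e(3)] position_split[OF s(1)] position_split[OF s(2)] e(1) by simp
  moreover have "?a' = smul (e * c / c') ?a"
    using e(2) c(2) by (simp add: fun_eq_iff field_simps)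
  then have "s' div nb = s div nb"
    using hamming_col_unique[OF hA, of "s div nb" "s' div nb" "e * c / c'"] position_split[OF s(1)]
      position_split[OF s(2)] e(1) c by simp
  ultimately have ss: "s = s'" by (metis div_mult_mod_eq)
  then have "smul 1 ?b = smul (1 / e) ?b" using e(3) by simp
  then have "e = 1" using smul_cancel[OF bnz] by (metis divide_eq_1_iff)
  then have "smul c' ?a = smul c ?a" using e(2) ss by simp
  then show ?thesis using smul_cancel[OF anz(1)] ss by metis
qed

lemma hdist_weight: "hdist n x y = weight (x - y)"
  unfolding hdist_def weight_def by simp

lemma weight_commute: "weight (x - y) = weight (y - x)"
proof -
  have "{i. i < n \<and> (x - y) i \<noteq> 0} = {i. i < n \<and> (y - x) i \<noteq> 0}" by auto
  then show ?thesis unfolding weight_def by simp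
qed

lemma weight_eq_0_iff:
  assumes z: "z \<in> vecs n" shows "weight z = 0 \<longleftrightarrow> z = 0"
proof
  assume "weight z = 0"
  then have "z i = 0" if "i < n" for i using that unfolding weight_def by simp
  moreover have "z i = 0" if "\<not> i < n" for i using z that unfolding vecs_def by simp
  ultimately show "z = 0" by (intro ext) (metis zero_fun_apply)
qed (simp add: weight_def)

lemma weight_single: "s < n \<Longrightarrow> c \<noteq> 0 \<Longrightarrow> weight (single s c) = 1"
proof -
  assume "s < n" "c \<noteq> 0"
  then have "{i. i < n \<and> single s c i \<noteq> 0} = {s}" by (auto simp: single_def)
  then show ?thesis unfolding weight_def by simp
qed

lemma weight_one_iff:
  assumes z: "z \<in> vecs n"
  shows "weight z = 1 \<longleftrightarrow> (\<exists>s<n. \<exists>c. c \<noteq> 0 \<and> z = single s c)"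
proof
  assume "weight z = 1"
  then obtain s where s: "{i. i < n \<and> z i \<noteq> 0} = {s}" unfolding weight_def by (rule card_1_singletonE)
  have "z = single s (z s)"
  proof
    fix i show "z i = single s (z s) i"
      using s z unfolding single_def vecs_def by (cases "i < n") auto
  qed
  then show "\<exists>s<n. \<exists>c. c \<noteq> 0 \<and> z = single s c" using s by blast
qed (auto simp: weight_single)

lemma weight_remove_entry:
  assumes "s < n" "z s \<noteq> 0"
  shows "weight (z - single s (z s)) + 1 = weight z"
proof -
  have "{i. i < n \<and> (z - single s (z s)) i \<noteq> 0} = {i. i < n \<and> z i \<noteq> 0} - {s}"
    by (auto simp: single_def)
  moreover have "card {i. i < n \<and> z i \<noteq> 0} > 0" using assms by (auto simp: card_gt_0_iff)
  ultimately show ?thesis using assms unfolding weight_def by (simp add: card_Diff_singleton)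
qed

lemma weight_change_entry: "weight (y - single s c) \<le> weight y + 1"
proof -
  have "{i. i < n \<and> (y - single s c) i \<noteq> 0} \<subseteq> insert s {i. i < n \<and> y i \<noteq> 0}"
    by (auto simp: single_def)
  then have "weight (y - single s c) \<le> card (insert s {i. i < n \<and> y i \<noteq> 0})"
    unfolding weight_def by (intro card_mono) auto
  also have "\<dots> \<le> weight y + 1" unfolding weight_def by (simp add: card_insert_if)
  finally show ?thesis .
qed

text \<open>Each nonzero entry contributes a rank-one summand to the syndrome, so the rank of the
  syndrome is at most the weight.\<close>
lemma mrank_syndrome_le_weight:
  assumes "y \<in> vecs n" shows "mrank (syndrome y) mb \<le> weight y"
  using assms
proof (induction "weight y" arbitrary: y)
  case 0
  then have "y = 0" using weight_eq_0_iff by metis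
  then have "syndrome y = 0" by (simp only: syndrome_zero)
  then have "mrank (syndrome y) mb = 0" using mrank_zero_iff[OF syndrome_in_mats] by blast
  then show ?case by simp
next
  case (Suc w)
  then have "{i. i < n \<and> y i \<noteq> 0} \<noteq> {}" unfolding weight_def by (intro notI) simp
  then obtain s where s: "s < n" "y s \<noteq> 0" by blast
  define y' where "y' = y - single s (y s)"
  have y': "y' \<in> vecs n" "weight y' = w"
    using Suc(2,3) weight_remove_entry[of s y, OF s] s(1) unfolding y'_def by auto
  interpret rank_update "syndrome y'" ma mb by (unfold_locales) (rule syndrome_in_mats)
  have "syndrome y = syndrome y' + syndrome (single s (y s))"
    unfolding y'_def by (simp add: syndrome_diff)
  then have "mrank (syndrome y) mb \<le> mrank (syndrome y') mb + 1"
    using rank_one_update_cases[OF syndrome_single_rank_one[OF s]] by auto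
  then show ?case using Suc(1)[OF y'(2)[symmetric] y'(1)] y'(2) Suc(2) by simp
qed

text \<open>Conversely, every ma x mb matrix of rank r is the syndrome of a word of weight at most r:
  peel off rank-one matrices, each of which is the syndrome of a weight-one word.\<close>
lemma syndrome_realize:
  assumes "S \<in> mats ma mb"
  shows "\<exists>y\<in>vecs n. syndrome y = S \<and> weight y \<le> mrank S mb"
  using assms
proof (induction "mrank S mb" arbitrary: S)
  case 0
  then have "S = 0" using mrank_zero_iff[of S ma mb] by simp
  then have "0 \<in> vecs n \<and> syndrome 0 = S \<and> weight 0 \<le> mrank S mb" by (simp add: weight_def)
  then show ?case by blast
next
  case (Suc r)
  interpret rank_update S ma mb by unfold_locales (rule Suc(3))
  have "1 \<le> mrank S mb" using Suc(2) by simp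
  from exists_rank_one_down[OF this]
  obtain R where R: "R \<in> rank_one ma mb" "mrank (S + R) mb + 1 = mrank S mb" by blast
  then have r: "r = mrank (S + R) mb" using Suc(2) by simp
  from Suc(1)[OF r mats_add[OF Suc(3) rank_one_in_mats[OF R(1)]]]
  obtain y' where y': "y' \<in> vecs n" "syndrome y' = S + R" "weight y' \<le> r" unfolding r[symmetric] by blast
  obtain s c where sc: "s < n" "c \<noteq> 0" "R = syndrome (single s c)"
    using rank_one_syndrome_single[OF R(1)] by blast
  have "y' - single s c \<in> vecs n" using vecs_diff[OF y'(1) vecs_single[OF sc(1)]] .
  moreover have "syndrome (y' - single s c) = S"
    unfolding syndrome_diff y'(2) sc(3) by (rule add_diff_cancel)
  moreover have "weight (y' - single s c) \<le> Suc r" using weight_change_entry[of y' s c] y'(3) by simp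
  ultimately show ?case using Suc(2) by (intro bexI[of _ "y' - single s c"]) simp_all
qed

lemma syndrome_surj: "syndrome ` vecs n = mats ma mb"
  using syndrome_in_mats syndrome_realize by fastforce

lemma all_rows_split:
  "(\<forall>r<ma * mb. P (r div mb) (r mod mb)) \<longleftrightarrow> (\<forall>i<ma. \<forall>j<mb. P i j)"
proof
  assume h: "\<forall>r<ma * mb. P (r div mb) (r mod mb)"
  show "\<forall>i<ma. \<forall>j<mb. P i j"
  proof (intro allI impI)
    fix i j assume "i < ma" "j < mb"
    moreover have "(i + 1) * mb \<le> ma * mb" using \<open>i < ma\<close> by (intro mult_le_mono1) simp
    ultimately show "P i j" using h[rule_format, of "i * mb + j"] by simp
  qed
qed (simp add: mb_pos less_mult_imp_div_less)

lemma code_eq: "code = {x\<in>vecs n. syndrome x = 0}"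
proof -
  have "(\<forall>r<ma * mb. (\<Sum>s<n. kron A B mb nb r s * x s) = 0) \<longleftrightarrow> syndrome x = 0" for x
    using all_rows_split[of "\<lambda>i j. (\<Sum>s<n. A i (s div nb) * B j (s mod nb) * x s) = 0"]
    by (auto simp: kron_def syndrome_def fun_eq_iff)
  then show ?thesis unfolding code_def kernel_code_def by blast
qed

lemma code_vecs: "code \<subseteq> vecs n"
  unfolding code_eq by blast

lemma finite_code: "finite code"
  using code_vecs by blast

lemma zero_in_code: "0 \<in> code"
  unfolding code_eq by simp

lemma code_diff: "x \<in> code \<Longrightarrow> y \<in> code \<Longrightarrow> x - y \<in> code"
  unfolding code_eq by (simp add: syndrome_diff vecs_diff)

lemma is_subspace_code: "is_subspace code"
  unfolding is_subspace_def code_eq by (auto simp: syndrome_add syndrome_smul vecs_add fun_eq_iff)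

lemma dist_code_eq:
  assumes x: "x \<in> vecs n" shows "dist_code n code x = mrank (syndrome x) mb"
  unfolding dist_code_def
proof (rule Min_eqI)
  show "finite (hdist n x ` code)" using finite_code by simp
  show "mrank (syndrome x) mb \<le> d" if d: "d \<in> hdist n x ` code" for d
  proof -
    obtain c where c: "c \<in> code" "d = weight (x - c)" using d hdist_weight by auto
    then have "syndrome (x - c) = syndrome x" unfolding code_eq by (simp add: syndrome_diff)
    then show ?thesis using mrank_syndrome_le_weight[of "x - c"] x c code_vecs by auto
  qed
  obtain y where y: "y \<in> vecs n" "syndrome y = syndrome x" "weight y \<le> mrank (syndrome x) mb"
    using syndrome_realize[OF syndrome_in_mats] by blast
  have "x - y \<in> code" unfolding code_eq using x y by (simp add: syndrome_diff vecs_diff)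
  moreover have "hdist n x (x - y) = mrank (syndrome x) mb"
    using y mrank_syndrome_le_weight[OF y(1)] by (simp add: hdist_weight)
  ultimately show "mrank (syndrome x) mb \<in> hdist n x ` code" by (metis image_eqI)
qed

lemma layer_eq: "layer n code (int l) = {x\<in>vecs n. mrank (syndrome x) mb = l}"
  unfolding layer_def using dist_code_eq by auto

lemma covering_radius_code: "covering_radius n code = min ma mb"
proof -
  have "dist_code n code ` vecs n = (\<lambda>S. mrank S mb) ` syndrome ` vecs n"
    using dist_code_eq by (auto simp: image_image)
  also have "\<dots> = (\<lambda>S. mrank S mb) ` (mats ma mb :: (nat \<Rightarrow> nat \<Rightarrow> 'a) set)" by (simp only: syndrome_surj)
  finally have e: "dist_code n code ` vecs n = (\<lambda>S. mrank S mb) ` (mats ma mb :: (nat \<Rightarrow> nat \<Rightarrow> 'a) set)" .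
  have "Max ((\<lambda>S. mrank S mb) ` (mats ma mb :: (nat \<Rightarrow> nat \<Rightarrow> 'a) set)) = min ma mb"
  proof (rule Max_eqI)
    show "finite ((\<lambda>S. mrank S mb) ` (mats ma mb :: (nat \<Rightarrow> nat \<Rightarrow> 'a) set))"
      by (intro finite_imageI finite_mats[OF mb_pos])
    show "d \<le> min ma mb" if d: "d \<in> (\<lambda>S. mrank S mb) ` (mats ma mb :: (nat \<Rightarrow> nat \<Rightarrow> 'a) set)" for d
    proof -
      obtain S :: "nat \<Rightarrow> nat \<Rightarrow> 'a" where "S \<in> mats ma mb" "d = mrank S mb" using d by blast
      then show ?thesis using mrank_le_rows[of S ma mb] mrank_le_cols[of S ma mb] by simp
    qed
    show "min ma mb \<in> (\<lambda>S. mrank S mb) ` (mats ma mb :: (nat \<Rightarrow> nat \<Rightarrow> 'a) set)"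
      using mrank_diag_one[where 'a='a, of ma mb] diag_one_in_mats by (metis image_eqI)
  qed
  then show ?thesis unfolding covering_radius_def e .
qed

text \<open>Since the syndrome map is onto the q^(ma mb) matrices, the code has q^(n - ma mb) words.\<close>
lemma card_code: "card code = CARD('a) ^ (n - ma * mb)"
proof -
  have "card (vecs n :: (nat \<Rightarrow> 'a) set) = card (syndrome ` vecs n) * card {x\<in>vecs n. syndrome x = 0}"
    by (rule card_additive[OF is_subspace_vecs finite_vecs]) (simp add: syndrome_add)
  then have e: "CARD('a) ^ n = CARD('a) ^ (ma * mb) * card code"
    unfolding syndrome_surj card_mats[OF mb_pos] card_vecs code_eq[symmetric] .
  obtain d where d: "card code = CARD('a) ^ d" using card_subspace_power[OF is_subspace_code code_vecs] by blast
  then have "CARD('a) ^ n = CARD('a) ^ (ma * mb + d)" using e by (simp add: power_add)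
  then have "n = ma * mb + d" by (simp only: power_CARD_inject)
  then show ?thesis using d by (metis add_diff_cancel_left')
qed

section \<open>Minimum distance\<close>

lemma weight_two_decomp:
  assumes z: "z \<in> vecs n" and w: "weight z = 2"
  obtains s1 s2 where "s1 < n" "s2 < n" "s1 \<noteq> s2" "z s1 \<noteq> 0" "z s2 \<noteq> 0"
    "z = single s1 (z s1) + single s2 (z s2)"
proof -
  obtain s1 s2 where s: "{i. i < n \<and> z i \<noteq> 0} = {s1, s2}" "s1 \<noteq> s2"
    using w unfolding weight_def by (meson card_2_iff)
  have "z = single s1 (z s1) + single s2 (z s2)"
  proof
    fix i show "z i = (single s1 (z s1) + single s2 (z s2)) i"
      using s z unfolding single_def vecs_def by (cases "i < n") auto
  qed
  with s that show ?thesis by blast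
qed

text \<open>Nonzero codewords have weight at least 3: weight-one words have rank-one syndromes and two
  weight-one words with the same syndrome coincide.\<close>
lemma code_weight_ge_3:
  assumes z: "z \<in> code" "z \<noteq> 0" shows "3 \<le> weight z"
proof -
  have zv: "z \<in> vecs n" and sz: "syndrome z = 0" using z(1) unfolding code_eq by auto
  have "weight z \<noteq> 1"
  proof
    assume "weight z = 1"
    then obtain s c where "s < n" "c \<noteq> 0" "z = single s c" using weight_one_iff[OF zv] by blast
    then show False using syndrome_single_rank_one rank_one_nonzero sz by metis
  qed
  moreover have "weight z \<noteq> 2"
  proof
    assume "weight z = 2"
    then obtain s1 s2 where s: "s1 < n" "s2 < n" "s1 \<noteq> s2" "z s1 \<noteq> 0" "z s2 \<noteq> 0"
      and zs: "z = single s1 (z s1) + single s2 (z s2)" by (rule weight_two_decomp[OF zv])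
    have "syndrome (single s1 (z s1)) + syndrome (single s2 (z s2)) = 0"
      using sz zs syndrome_add by metis
    then have "syndrome (single s2 (z s2)) = syndrome (single s1 (- z s1))"
      by (simp add: syndrome_single[OF s(1)] syndrome_single[OF s(2)] outer_def fun_eq_iff
          eq_neg_iff_add_eq_0 add.commute)
    moreover have "- z s1 \<noteq> 0" using s(4) by simp
    ultimately show False using syndrome_single_inj[OF s(2) s(1) s(5)] s(3) by blast
  qed
  moreover have "weight z \<noteq> 0" using weight_eq_0_iff[OF zv] z(2) by simp
  ultimately show ?thesis by linarith
qed

text \<open>Three dependent columns of A, placed in column 0 of each block, give a codeword of weight 3.\<close>
lemma exists_code_weight_3:
  assumes "2 \<le> ma" shows "\<exists>y\<in>code. weight y = 3"
proof -
  obtain j1 j2 j3 c1 c2 c3 where j: "j1 < na" "j2 < na" "j3 < na" "j1 \<noteq> j2" "j1 \<noteq> j3" "j2 \<noteq> j3"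
    and c: "c1 \<noteq> 0" "c2 \<noteq> 0" "c3 \<noteq> 0"
    and dep: "smul c1 (col A ma j1) + smul c2 (col A ma j2) + smul c3 (col A ma j3) = 0"
    using hamming_dependent_columns[OF hA assms] by blast
  have p: "j * nb < n \<and> j * nb div nb = j \<and> j * nb mod nb = 0" if "j < na" for j
    using position_join[OF that nb_pos] by simp
  define y where "y = single (j1 * nb) c1 + single (j2 * nb) c2 + single (j3 * nb) c3"
  have "syndrome y = outer (smul c1 (col A ma j1) + smul c2 (col A ma j2) + smul c3 (col A ma j3)) (col B mb 0)"
    unfolding y_def syndrome_add outer_add_left
    using syndrome_single p j(1-3) by simp
  then have "syndrome y = 0" unfolding dep by simp
  moreover have "y \<in> vecs n" unfolding y_def using p j by (intro vecs_add vecs_single) auto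
  moreover have "{i. i < n \<and> y i \<noteq> 0} = {j1 * nb, j2 * nb, j3 * nb}"
    unfolding y_def single_def using p j c nb_pos by auto
  then have "weight y = 3" unfolding weight_def using j(4-6) nb_pos by simp
  ultimately show ?thesis unfolding code_eq by blast
qed

lemma min_dist_code:
  assumes "2 \<le> ma" shows "min_dist n code = 3"
  unfolding min_dist_def
proof (rule Min_eqI)
  have "{hdist n x y |x y. x \<in> code \<and> y \<in> code \<and> x \<noteq> y} \<subseteq> (\<lambda>(x, y). hdist n x y) ` (code \<times> code)"
    by auto
  then show "finite {hdist n x y |x y. x \<in> code \<and> y \<in> code \<and> x \<noteq> y}"
    by (rule finite_subset) (simp add: finite_code)
  show "3 \<le> d" if "d \<in> {hdist n x y |x y. x \<in> code \<and> y \<in> code \<and> x \<noteq> y}" for d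
    using that code_diff code_weight_ge_3 by (auto simp: hdist_weight)
  obtain y where y: "y \<in> code" "weight y = 3" using exists_code_weight_3[OF assms] by blast
  then have "y \<noteq> 0" "hdist n y 0 = 3" by (auto simp: hdist_weight weight_def)
  then have "\<exists>x y. 3 = hdist n x y \<and> x \<in> code \<and> y \<in> code \<and> x \<noteq> y" using y(1) zero_in_code by metis
  then show "3 \<in> {hdist n x y |x y. x \<in> code \<and> y \<in> code \<and> x \<noteq> y}" by simp
qed

section \<open>Neighbours and intersection numbers\<close>

lemma neighbour_iff:
  fixes x y :: "nat \<Rightarrow> 'a"
  assumes x: "x \<in> vecs n"
  shows "y \<in> neighbours n x \<longleftrightarrow> y \<in> vecs n \<and> (\<exists>s<n. \<exists>c. c \<noteq> 0 \<and> y - x = single s c)"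
proof -
  have "y \<in> neighbours n x \<longleftrightarrow> y \<in> vecs n \<and> weight (y - x) = 1"
    unfolding neighbours_def hdist_weight using weight_commute[of x y] by simp
  then show ?thesis using weight_one_iff[of "y - x"] x by (auto simp: vecs_diff)
qed

lemma bij_neighbours_rank_one:
  fixes x :: "nat \<Rightarrow> 'a"
  assumes x: "x \<in> vecs n"
  shows "bij_betw (\<lambda>y. syndrome (y - x)) (neighbours n x) (rank_one ma mb)"
proof (rule bij_betw_imageI)
  show "inj_on (\<lambda>y. syndrome (y - x)) (neighbours n x)"
  proof
    fix y1 y2 assume "y1 \<in> neighbours n x" "y2 \<in> neighbours n x" "syndrome (y1 - x) = syndrome (y2 - x)"
    moreover obtain s1 c1 s2 c2 where "s1 < n" "c1 \<noteq> 0" "y1 - x = single s1 c1"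
      "s2 < n" "c2 \<noteq> 0" "y2 - x = single s2 c2"
      using neighbour_iff[OF x] calculation(1,2) by meson
    ultimately have "y1 - x = y2 - x" using syndrome_single_inj by metis
    then show "y1 = y2" by simp
  qed
  show "(\<lambda>y. syndrome (y - x)) ` neighbours n x = rank_one ma mb"
  proof
    show "(\<lambda>y. syndrome (y - x)) ` neighbours n x \<subseteq> rank_one ma mb"
      using neighbour_iff[OF x] syndrome_single_rank_one by auto
    show "rank_one ma mb \<subseteq> (\<lambda>y. syndrome (y - x)) ` neighbours n x"
    proof
      fix R :: "nat \<Rightarrow> nat \<Rightarrow> 'a" assume "R \<in> rank_one ma mb"
      then obtain s c where s: "s < n" "c \<noteq> 0" "R = syndrome (single s c)"
        using rank_one_syndrome_single by blast
      then have "x + single s c \<in> neighbours n x" using neighbour_iff[OF x] x by auto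
      moreover have "R = syndrome (x + single s c - x)" using s(3) by simp
      ultimately show "R \<in> (\<lambda>y. syndrome (y - x)) ` neighbours n x" by blast
    qed
  qed
qed

lemma card_neighbours_layer:
  fixes x :: "nat \<Rightarrow> 'a"
  assumes x: "x \<in> vecs n"
  shows "card (neighbours n x \<inter> layer n code (int t)) = card {R \<in> rank_one ma mb. mrank (syndrome x + R) mb = t}"
proof -
  let ?f = "\<lambda>y. syndrome (y - x)" and ?P = "\<lambda>R. mrank (syndrome x + R) mb = t"
  have bij: "bij_betw ?f (neighbours n x) (rank_one ma mb)" by (rule bij_neighbours_rank_one[OF x])
  have set: "neighbours n x \<inter> layer n code (int t) = {y \<in> neighbours n x. ?P (?f y)}"
  proof (rule set_eqI)
    fix y :: "nat \<Rightarrow> 'a"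
    have "syndrome x + ?f y = syndrome y" by (simp add: syndrome_diff)
    then show "y \<in> neighbours n x \<inter> layer n code (int t) \<longleftrightarrow> y \<in> {y \<in> neighbours n x. ?P (?f y)}"
      unfolding layer_eq neighbours_def by auto
  qed
  have inj: "inj_on ?f {y \<in> neighbours n x. ?P (?f y)}"
    using bij_betw_imp_inj_on[OF bij] by (rule inj_on_subset) blast
  have "?f ` {y \<in> neighbours n x. ?P (?f y)} = {R \<in> ?f ` neighbours n x. ?P R}"
    by blast
  also have "\<dots> = {R \<in> rank_one ma mb. ?P R}" unfolding bij_betw_imp_surj_on[OF bij] ..
  finally have img: "?f ` {y \<in> neighbours n x. ?P (?f y)} = {R \<in> rank_one ma mb. ?P R}" .
  have "card (neighbours n x \<inter> layer n code (int t)) = card (?f ` {y \<in> neighbours n x. ?P (?f y)})"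
    unfolding set by (rule card_image[OF inj, symmetric])
  then show ?thesis unfolding img .
qed

text \<open>There are (q - 1) n rank-one ma x mb matrices, one for each weight-one word.\<close>
lemma card_rank_one: "card (rank_one ma mb :: (nat \<Rightarrow> nat \<Rightarrow> 'a) set) = (CARD('a) - 1) * n"
proof -
  have "bij_betw (\<lambda>(s, c). syndrome (single s c)) ({..<n} \<times> (UNIV - {0 :: 'a})) (rank_one ma mb)"
  proof (rule bij_betw_imageI)
    show "inj_on (\<lambda>(s, c). syndrome (single s c)) ({..<n} \<times> (UNIV - {0 :: 'a}))"
    proof (rule inj_onI)
      fix p p' assume "p \<in> {..<n} \<times> (UNIV - {0 :: 'a})" "p' \<in> {..<n} \<times> (UNIV - {0 :: 'a})"
        "(\<lambda>(s, c). syndrome (single s c)) p = (\<lambda>(s, c). syndrome (single s c)) p'"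
      then show "p = p'" using syndrome_single_inj[of "fst p" "fst p'" "snd p" "snd p'"]
        by (auto simp: case_prod_beta prod_eq_iff mem_Times_iff)
    qed
    show "(\<lambda>(s, c). syndrome (single s c)) ` ({..<n} \<times> (UNIV - {0 :: 'a})) = rank_one ma mb"
    proof
      show "(\<lambda>(s, c). syndrome (single s c)) ` ({..<n} \<times> (UNIV - {0 :: 'a})) \<subseteq> rank_one ma mb"
        using syndrome_single_rank_one by auto
      show "rank_one ma mb \<subseteq> (\<lambda>(s, c). syndrome (single s c)) ` ({..<n} \<times> (UNIV - {0 :: 'a}))"
      proof
        fix R :: "nat \<Rightarrow> nat \<Rightarrow> 'a" assume "R \<in> rank_one ma mb"
        then obtain s c where "s < n" "c \<noteq> 0" "R = syndrome (single s c)"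
          using rank_one_syndrome_single by blast
        then show "R \<in> (\<lambda>(s, c). syndrome (single s c)) ` ({..<n} \<times> (UNIV - {0 :: 'a}))"
          by (intro image_eqI[where x="(s, c)"]) auto
      qed
    qed
  qed
  then show ?thesis by (simp add: bij_betw_same_card[symmetric] card_cartesian_product card_Diff_singleton)
qed

lemma layer_counts:
  fixes x :: "nat \<Rightarrow> 'a"
  assumes x: "x \<in> layer n code (int l)"
  shows "card (neighbours n x \<inter> layer n code (int l + 1)) * (CARD('a) - 1)
           = (CARD('a) ^ ma - CARD('a) ^ l) * (CARD('a) ^ mb - CARD('a) ^ l)"
    and "card (neighbours n x \<inter> layer n code (int l - 1)) * (CARD('a) - 1)
           = (CARD('a) ^ l - 1) * CARD('a) ^ (l - 1)"
    and "card (neighbours n x \<inter> layer n code (int l)) + card (neighbours n x \<inter> layer n code (int l - 1))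
           + card (neighbours n x \<inter> layer n code (int l + 1)) = (CARD('a) - 1) * n"
proof -
  have xv: "x \<in> vecs n" and l: "mrank (syndrome x) mb = l" using x unfolding layer_eq by auto
  interpret rank_update "syndrome x" ma mb by unfold_locales (rule syndrome_in_mats)
  define same down up where
    "same = {R \<in> rank_one ma mb. mrank (syndrome x + R) mb = l}" and
    "down = {R \<in> rank_one ma mb. mrank (syndrome x + R) mb + 1 = l}" and
    "up = {R \<in> rank_one ma mb. mrank (syndrome x + R) mb = l + 1}"
  have "card (neighbours n x \<inter> layer n code (int (l + 1))) = card up"
    unfolding up_def by (rule card_neighbours_layer[OF xv])
  then have c_up: "card (neighbours n x \<inter> layer n code (int l + 1)) = card up" by (simp add: add.commute)
  have c_same: "card (neighbours n x \<inter> layer n code (int l)) = card same"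
    unfolding same_def by (rule card_neighbours_layer[OF xv])
  have c_down: "card (neighbours n x \<inter> layer n code (int l - 1)) = card down"
  proof (cases "l = 0")
    case True
    then have "layer n code (int l - 1) = {}" "down = {}" by (simp_all add: layer_def down_def)
    then show ?thesis by simp
  next
    case False
    then have "down = {R \<in> rank_one ma mb. mrank (syndrome x + R) mb = l - 1}"
      unfolding down_def by (intro Collect_cong) auto
    then have "card (neighbours n x \<inter> layer n code (int (l - 1))) = card down"
      by (simp only: card_neighbours_layer[OF xv])
    moreover have "int (l - 1) = int l - 1" using False by simp
    ultimately show ?thesis by simp
  qed
  show "card (neighbours n x \<inter> layer n code (int l + 1)) * (CARD('a) - 1)
           = (CARD('a) ^ ma - CARD('a) ^ l) * (CARD('a) ^ mb - CARD('a) ^ l)"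
    using count_rank_one_up c_up unfolding up_def l by simp
  show "card (neighbours n x \<inter> layer n code (int l - 1)) * (CARD('a) - 1)
           = (CARD('a) ^ l - 1) * CARD('a) ^ (l - 1)"
    using count_rank_one_down c_down unfolding down_def l by simp
  have "R \<in> same \<union> down \<union> up" if R: "R \<in> rank_one ma mb" for R
  proof -
    have "mrank (syndrome x + R) mb \<in> {l, l + 1, l - 1}" using rank_one_update_cases[OF R] l by simp
    then show ?thesis unfolding same_def down_def up_def using R by auto
  qed
  then have "rank_one ma mb = same \<union> down \<union> up" unfolding same_def down_def up_def by blast
  moreover have "finite (rank_one ma mb :: (nat \<Rightarrow> nat \<Rightarrow> 'a) set)"
    unfolding rank_one_def by simp
  moreover have "same \<inter> down = {}" "(same \<union> down) \<inter> up = {}"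
    unfolding same_def down_def up_def by auto
  ultimately have "card (rank_one ma mb :: (nat \<Rightarrow> nat \<Rightarrow> 'a) set) = card same + card down + card up"
    by (simp add: card_Un_disjoint)
  then show "card (neighbours n x \<inter> layer n code (int l)) + card (neighbours n x \<inter> layer n code (int l - 1))
           + card (neighbours n x \<inter> layer n code (int l + 1)) = (CARD('a) - 1) * n"
    using c_same c_down c_up card_rank_one by simp
qed

lemma intersection_numbers:
  fixes x :: "nat \<Rightarrow> 'a"
  defines "G \<equiv> \<lambda>l. (CARD('a) ^ l - 1) div (CARD('a) - 1)"
  assumes na: "na = G ma" and nb: "nb = G mb" and x: "x \<in> layer n code (int l)"
  shows "card (neighbours n x \<inter> layer n code (int l + 1)) = (CARD('a) - 1) * (na - G l) * (nb - G l)"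
    and "card (neighbours n x \<inter> layer n code (int l - 1)) = G l * CARD('a) ^ (l - 1)"
    and "card (neighbours n x \<inter> layer n code (int l))
           = (CARD('a) - 1) * n - G l * CARD('a) ^ (l - 1) - (CARD('a) - 1) * (na - G l) * (nb - G l)"
proof -
  have q1: "CARD('a) - 1 \<noteq> 0" using CARD_field_ge_2[where 'a='a] by simp
  have l: "l \<le> ma" "l \<le> mb" using x mrank_le_rows[OF syndrome_in_mats] mrank_le_cols[OF syndrome_in_mats]
    unfolding layer_eq by auto
  have "card (neighbours n x \<inter> layer n code (int l + 1)) * (CARD('a) - 1)
      = (CARD('a) - 1) * (na - G l) * ((CARD('a) - 1) * (nb - G l))"
    using layer_counts(1)[OF x] power_diff_div[OF l(1), of "CARD('a)"] power_diff_div[OF l(2), of "CARD('a)"]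
    unfolding na nb G_def by simp
  then show up: "card (neighbours n x \<inter> layer n code (int l + 1)) = (CARD('a) - 1) * (na - G l) * (nb - G l)"
    using q1 by (simp add: ac_simps)
  have "card (neighbours n x \<inter> layer n code (int l - 1)) * (CARD('a) - 1) = (CARD('a) - 1) * (G l * CARD('a) ^ (l - 1))"
    using layer_counts(2)[OF x] power_minus_one_div[of "CARD('a)" l] unfolding G_def by (simp add: ac_simps)
  then show down: "card (neighbours n x \<inter> layer n code (int l - 1)) = G l * CARD('a) ^ (l - 1)"
    using q1 by simp
  show "card (neighbours n x \<inter> layer n code (int l))
           = (CARD('a) - 1) * n - G l * CARD('a) ^ (l - 1) - (CARD('a) - 1) * (na - G l) * (nb - G l)"
    using layer_counts(3)[OF x] up down by linarith
qed

end

theorem theorem4p1: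
  fixes A B :: "nat \<Rightarrow> nat \<Rightarrow> 'a::{finite,field}"
    and ma mb na nb :: nat
  defines "q \<equiv> card (UNIV :: 'a set)"
  assumes hA: "hamming_pcm A ma na" and hB: "hamming_pcm B mb nb"
    and na_def: "na = (q ^ ma - 1) div (q - 1)" and nb_def: "nb = (q ^ mb - 1) div (q - 1)"
    and na3: "na \<ge> 3" and nb3: "nb \<ge> 3"
  shows "let n = na * nb; C = kernel_code (kron A B mb nb) (ma * mb) n;
             \<rho> = covering_radius n C;
             b = (\<lambda>l. (q - 1) * (na - (q ^ l - 1) div (q - 1)) * (nb - (q ^ l - 1) div (q - 1)));
             c = (\<lambda>l. ((q ^ l - 1) div (q - 1)) * q ^ (l - 1))
         in card C = q ^ (n - ma * mb) \<and>
            min_dist n C = 3 \<and>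
            \<rho> = min ma mb \<and>
            completely_regular n C b c \<and>
            (\<forall>l\<le>\<rho>. \<forall>x \<in> layer n C (int l).
               card (neighbours n x \<inter> layer n C (int l)) = (q - 1) * n - c l - b l)"
proof -
  have q2: "2 \<le> q" unfolding q_def by (rule CARD_field_ge_2)
  have ma2: "2 \<le> ma" using hamming_redundancy_ge_2[OF q2] na_def na3 by blast
  have mb2: "2 \<le> mb" using hamming_redundancy_ge_2[OF q2] nb_def nb3 by blast
  interpret kron_hamming A B ma mb na nb
    by unfold_locales (use hA hB nb3 mb2 in auto)
  note counts = intersection_numbers[OF na_def[unfolded q_def] nb_def[unfolded q_def], folded q_def]
  have "completely_regular (na * nb) code
     (\<lambda>l. (q - 1) * (na - (q ^ l - 1) div (q - 1)) * (nb - (q ^ l - 1) div (q - 1)))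
     (\<lambda>l. ((q ^ l - 1) div (q - 1)) * q ^ (l - 1))"
    unfolding completely_regular_def using counts(1,2) by blast
  then show ?thesis
    unfolding Let_def code_def[symmetric]
    using card_code min_dist_code[OF ma2] covering_radius_code counts(3) unfolding q_def by auto
qed

end
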